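(* In the construction described in the context, for every $k\in\mathbb{N}$ the space $(P_k,\rho_k)$ is compact and $2$-quasiconvex. Moreover, $(P_\infty,\rho_\infty)$ is compact and $2$-quasiconvex, and the sets $i_k(P_k)$ converge to $P_\infty$ in the Hausdorff–Pompeiu distance of $(P_\infty,\rho_\infty)$.
   Context: Construction. Let $(e_n)$ be the canonical basis of $\ell^1(\mathbb{N})$; $\alpha(t)=t$ on $[0,\frac12]$, $\alpha(t)=1-t$ on $[\frac12,1]$; $S_n=\{te_1+\alpha(t)e_{n+1}:t\in[0,1]\}$; $x_n=(\frac12-\frac1{2^n})e_1$, $x_\infty=\frac12e_1$; $Y=\bigcup_{n\ge1}(2^{-(n+1)}S_n+x_n)\cup\{x_\infty\}$ with the $\ell^1$ metric $\theta$. $Y$ is the image of an arc-length parametrized injective curve $\gamma:[0,1]\to Y$ with $\gamma(0)=0$, $\gamma(1)=x_\infty$. For $r>0$ let $\theta_r(s,t)=r\,\theta(\gamma(s/r),\gamma(t/r))$ on $[0,r]$. Set $P_1=[0,1]$, $\rho_1=\theta_1$, $L_1=\{1\}$. Given $(P_k,\rho_k)$ with $P_k\subset[0,1]^k$ and $L_k\subset P_k$, let $\pi_k$ denote the $k$-th coordinate, choose a countable dense subset $Q_k=\{q_n:n\in\mathbb{N}\}$ (distinct $q_n$) of $P_k\setminus L_k$ with $\pi_k$ injective on $Q_k$ and $0\notin\pi_k(Q_k)$, set $r_n=2^{-(n+k)}$, $d_n=\theta_{r_n}$, and let $P_{k+1}=\{(x,0):x\in P_k\setminus Q_k\}\cup\{(q_n,y):n\in\mathbb{N},y\in[0,r_n]\}\subset[0,1]^{k+1}$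 with metric $\rho_{k+1}((x_1,y_1),(x_2,y_2))$ equal to $d_n(y_1,y_2)$ if $x_1=x_2=q_n$; $d_n(y_1,0)+\rho_k(x_1,x_2)+d_m(0,y_2)$ if $x_1=q_n,x_2=q_m$, $n\ne m$; $d_n(y_1,0)+\rho_k(x_1,x_2)$ if $x_1=q_n$, $x_2\notin Q_k$ (and symmetrically); $\rho_k(x_1,x_2)$ if $x_1,x_2\notin Q_k$. Let $L_{k+1}=(L_k\times\{0\})\cup\{(q_n,r_n):n\in\mathbb{N}\}$. Let $i_k:P_k\to[0,1]^{\mathbb{N}}$, $i_k(x)=(x_1,\dots,x_k,0,0,\dots)$; $\mathcal P_\infty=\bigcup_k i_k(P_k)$ with the metric $\rho_\infty(x,y)=\rho_k(i_k^{-1}x,i_k^{-1}y)$ for $x,y\in i_k(P_k)$; $(P_\infty,\rho_\infty)$ is the completion of $(\mathcal P_\infty,\rho_\infty)$. A metric space is $C$-quasiconvex if its intrinsic distance (infimum of lengths of continuous curves joining two points) is at most $C$ times its metric. Hausdorff–Pompeiu distance: $d_H(A,B)=\max\{\sup_{a\in A}\mathrm{dist}(a,B),\sup_{b\in B}\mathrm{dist}(b,A)\}$. *)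

theory Defs
  imports "HOL-Analysis.Analysis"
begin

text \<open>Points of l^1(N) are modelled as functions nat => real; the canonical basis
  vector e_n (n >= 1) is the indicator of the index n.\<close>

definition e :: "nat \<Rightarrow> nat \<Rightarrow> real" where
  "e n = (\<lambda>i. if i = n then 1 else 0)"

definition theta :: "(nat \<Rightarrow> real) \<Rightarrow> (nat \<Rightarrow> real) \<Rightarrow> real" where
  "theta x y = (\<Sum>i. \<bar>x i - y i\<bar>)"

definition alpha :: "real \<Rightarrow> real" where
  "alpha t = (if t \<le> 1/2 then t else 1 - t)"

definition S :: "nat \<Rightarrow> (nat \<Rightarrow> real) set" where
  "S n = {(\<lambda>i. t * e 1 i + alpha t * e (n+1) i) | t. 0 \<le> t \<and> t \<le> 1}"

definition xpt :: "nat \<Rightarrow> nat \<Rightarrow> real" where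
  "xpt n = (\<lambda>i. (1/2 - 1/2^n) * e 1 i)"

definition xinf :: "nat \<Rightarrow> real" where
  "xinf = (\<lambda>i. (1/2) * e 1 i)"

definition Y :: "(nat \<Rightarrow> real) set" where
  "Y = (\<Union>n\<in>{1..}. (\<lambda>p. (\<lambda>i. (1/2)^(n+1) * p i + xpt n i)) ` S n) \<union> {xinf}"

text \<open>The arc-length parametrisation gamma : [0,1] -> Y (written out explicitly):
  on [1 - 2^(1-n), 1 - 2^(-n)] it runs through 2^(-(n+1)) S_n + x_n with speed 1,
  and gamma 1 = x_inf.\<close>

definition gamma :: "real \<Rightarrow> nat \<Rightarrow> real" where
  "gamma s = (if 1 \<le> s then xinf else
     (let n = (LEAST n::nat. 1 \<le> n \<and> s < 1 - 1/2^n);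
          t = 2^n * (s - (1 - 1/2^(n-1)))
      in (\<lambda>i. xpt n i + (1/2)^(n+1) * (t * e 1 i + alpha t * e (n+1) i))))"

definition theta_r :: "real \<Rightarrow> real \<Rightarrow> real \<Rightarrow> real" where
  "theta_r r s t = r * theta (gamma (s/r)) (gamma (t/r))"

text \<open>Points of P_k are real lists of length k.  The choice at stage K >= 1 is an
  enumeration Q K : nat => real list of Q_K; here the enumeration is 0-based, so
  Q K n is the paper's q_(n+1) and its radius is r_(n+1) = 2^(-(n+1+K)).\<close>

definition rad :: "nat \<Rightarrow> nat \<Rightarrow> real" where
  "rad K n = (1/2)^(n + 1 + K)"

fun Pk :: "(nat \<Rightarrow> nat \<Rightarrow> real list) \<Rightarrow> nat \<Rightarrow> real list set" where
  "Pk Q 0 = {}"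
| "Pk Q (Suc 0) = {[t] | t. 0 \<le> t \<and> t \<le> 1}"
| "Pk Q (Suc (Suc k)) =
     {x @ [0] | x. x \<in> Pk Q (Suc k) - range (Q (Suc k))}
     \<union> {Q (Suc k) n @ [y] | n y. 0 \<le> y \<and> y \<le> rad (Suc k) n}"

fun Lk :: "(nat \<Rightarrow> nat \<Rightarrow> real list) \<Rightarrow> nat \<Rightarrow> real list set" where
  "Lk Q 0 = {}"
| "Lk Q (Suc 0) = {[1]}"
| "Lk Q (Suc (Suc k)) =
     {x @ [0] | x. x \<in> Lk Q (Suc k)} \<union> {Q (Suc k) n @ [rad (Suc k) n] | n. True}"

fun rhok :: "(nat \<Rightarrow> nat \<Rightarrow> real list) \<Rightarrow> nat \<Rightarrow> real list \<Rightarrow> real list \<Rightarrow> real" where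
  "rhok Q 0 a b = 0"
| "rhok Q (Suc 0) a b = theta_r 1 (hd a) (hd b)"
| "rhok Q (Suc (Suc k)) a b =
     (let x1 = butlast a; y1 = last a; x2 = butlast b; y2 = last b;
          QK = range (Q (Suc k));
          d = (\<lambda>x. theta_r (rad (Suc k) (inv (Q (Suc k)) x)))
      in if x1 \<in> QK \<and> x2 \<in> QK then
           (if x1 = x2 then d x1 y1 y2
            else d x1 y1 0 + rhok Q (Suc k) x1 x2 + d x2 0 y2)
         else if x1 \<in> QK then d x1 y1 0 + rhok Q (Suc k) x1 x2
         else if x2 \<in> QK then rhok Q (Suc k) x1 x2 + d x2 0 y2
         else rhok Q (Suc k) x1 x2)"

definition admissible :: "(nat \<Rightarrow> nat \<Rightarrow> real list) \<Rightarrow> bool" where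
  "admissible Q \<longleftrightarrow> (\<forall>K\<ge>1.
      inj (Q K) \<and>
      range (Q K) \<subseteq> Pk Q K - Lk Q K \<and>
      (\<forall>x\<in>Pk Q K - Lk Q K. \<forall>\<epsilon>>0. \<exists>n. rhok Q K x (Q K n) < \<epsilon>) \<and>
      inj (\<lambda>n. last (Q K n)) \<and>
      (\<forall>n. last (Q K n) \<noteq> 0))"

definition emb :: "real list \<Rightarrow> nat \<Rightarrow> real" where
  "emb x = (\<lambda>j. if j < length x then x ! j else 0)"

definition Pcal :: "(nat \<Rightarrow> nat \<Rightarrow> real list) \<Rightarrow> (nat \<Rightarrow> real) set" where
  "Pcal Q = (\<Union>k\<in>{1..}. emb ` Pk Q k)"

definition rho_inf :: "(nat \<Rightarrow> nat \<Rightarrow> real list) \<Rightarrow> (nat \<Rightarrow> real) \<Rightarrow> (nat \<Rightarrow> real) \<Rightarrow> real" where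
  "rho_inf Q x y =
     (let k = (LEAST k. 1 \<le> k \<and> x \<in> emb ` Pk Q k \<and> y \<in> emb ` Pk Q k)
      in rhok Q k (map x [0..<k]) (map y [0..<k]))"

definition mcurve :: "'a set \<Rightarrow> ('a \<Rightarrow> 'a \<Rightarrow> real) \<Rightarrow> (real \<Rightarrow> 'a) \<Rightarrow> bool" where
  "mcurve M d g \<longleftrightarrow> (\<forall>t\<in>{0..1}. g t \<in> M) \<and>
     (\<forall>t\<in>{0..1}. \<forall>\<epsilon>>0. \<exists>\<delta>>0. \<forall>s\<in>{0..1}. \<bar>s - t\<bar> < \<delta> \<longrightarrow> d (g s) (g t) < \<epsilon>)"

definition curve_length :: "('a \<Rightarrow> 'a \<Rightarrow> real) \<Rightarrow> (real \<Rightarrow> 'a) \<Rightarrow> ereal" where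
  "curve_length d g =
     (SUP p \<in> {(n, t). (\<forall>i\<le>n. 0 \<le> t i \<and> t i \<le> 1) \<and> (\<forall>i<n. t i \<le> t (Suc i))}.
        ereal (\<Sum>i<fst p. d (g (snd p i)) (g (snd p (Suc i)))))"

definition intrinsic_dist :: "'a set \<Rightarrow> ('a \<Rightarrow> 'a \<Rightarrow> real) \<Rightarrow> 'a \<Rightarrow> 'a \<Rightarrow> ereal" where
  "intrinsic_dist M d x y =
     (INF g \<in> {g. mcurve M d g \<and> g 0 = x \<and> g 1 = y}. curve_length d g)"

definition quasiconvex :: "real \<Rightarrow> 'a set \<Rightarrow> ('a \<Rightarrow> 'a \<Rightarrow> real) \<Rightarrow> bool" where
  "quasiconvex C M d \<longleftrightarrow> (\<forall>x\<in>M. \<forall>y\<in>M. intrinsic_dist M d x y \<le> ereal (C * d x y))"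

definition hausdorff_pompeiu :: "'a::metric_space set \<Rightarrow> 'a set \<Rightarrow> real" where
  "hausdorff_pompeiu A B = max (SUP a\<in>A. infdist a B) (SUP b\<in>B. infdist b A)"

end

theory Submission
  imports Defs
begin

text \<open>
  The curve gamma is bi-Lipschitz: |s - t|/2 <= theta (gamma s) (gamma t) <= |s - t|. The lower
  bound is read off the first coordinate; the upper bound holds on each dyadic block
  [1 - 2^-m, 1 - 2^-(m+1)], where gamma is an explicit tent, and blocks glue to a Lipschitz path on
  [0,1]. So every arc d_n is a 2-bi-Lipschitz copy of an interval.

  P_(k+1) is obtained from P_k by attaching these arcs at the points of Q_k. Attaching preserves
  compactness, because only finitely many arcs are longer than any given length, so a sequence
  either converges to a foot point or eventually stays in one arc. It also preserves the property
  that any two points are joined by a path whose Lipschitz constant is at most twice their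
  distance: descend both points to their feet, and join the feet inside P_k. By induction this
  gives compactness and 2-quasiconvexity of every P_k.

  A point of P_(k+m) lies within 2^-k of the copy of P_k, since descending one level costs at most
  the radius of an arc. Hence the copies of the P_k are finer and finer nets of P_infinity, which is
  therefore totally bounded and complete, i.e. compact, and the Hausdorff distances tend to 0.
  Finally a point of the closure is reached from a nearby point of the union by concatenating
  paths between closer and closer approximations on consecutive dyadic blocks, which gives
  2-quasiconvexity of the completion.
\<close>

section \<open>Lipschitz paths and quasiconvexity\<close>

definition lipschitz_path :: "'a set \<Rightarrow> ('a \<Rightarrow> 'a \<Rightarrow> real) \<Rightarrow> (real \<Rightarrow> 'a) \<Rightarrow> real \<Rightarrow> bool" where
  "lipschitz_path M d g L \<longleftrightarrow> 0 \<le> L \<and> (\<forall>t\<in>{0..1}. g t \<in> M) \<and>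
     (\<forall>s\<in>{0..1}. \<forall>t\<in>{0..1}. d (g s) (g t) \<le> L * \<bar>s - t\<bar>)"

definition lipschitz_connected :: "real \<Rightarrow> 'a set \<Rightarrow> ('a \<Rightarrow> 'a \<Rightarrow> real) \<Rightarrow> bool" where
  "lipschitz_connected C M d \<longleftrightarrow> (\<forall>x\<in>M. \<forall>y\<in>M.
     \<exists>g L. lipschitz_path M d g L \<and> g 0 = x \<and> g 1 = y \<and> L \<le> C * d x y)"

lemma lipschitz_pathD:
  assumes "lipschitz_path M d g L"
  shows "0 \<le> L" "t \<in> {0..1} \<Longrightarrow> g t \<in> M"
    "s \<in> {0..1} \<Longrightarrow> t \<in> {0..1} \<Longrightarrow> d (g s) (g t) \<le> L * \<bar>s - t\<bar>"
  using assms unfolding lipschitz_path_def by auto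

lemma lipschitz_path_mcurve: "lipschitz_path M d g L \<Longrightarrow> mcurve M d g"
  unfolding mcurve_def
proof (intro conjI ballI allI impI)
  assume g: "lipschitz_path M d g L"
  show "g t \<in> M" if "t \<in> {0..1}" for t
    using lipschitz_pathD(2)[OF g that] .
  fix t \<epsilon> :: real assume t: "t \<in> {0..1}" and \<epsilon>: "0 < \<epsilon>"
  have L: "0 \<le> L" by (rule lipschitz_pathD(1)[OF g])
  show "\<exists>\<delta>>0. \<forall>s\<in>{0..1}. \<bar>s - t\<bar> < \<delta> \<longrightarrow> d (g s) (g t) < \<epsilon>"
  proof (intro exI[of _ "\<epsilon> / (L + 1)"] conjI ballI impI)
    fix s assume s: "s \<in> {0..1}" and st: "\<bar>s - t\<bar> < \<epsilon> / (L + 1)"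
    have "d (g s) (g t) \<le> L * \<bar>s - t\<bar>" by (rule lipschitz_pathD(3)[OF g s t])
    also have "\<dots> \<le> L * (\<epsilon> / (L + 1))" using st L by (intro mult_left_mono) auto
    also have "\<dots> < \<epsilon>" using L \<epsilon> by (simp add: field_simps)
    finally show "d (g s) (g t) < \<epsilon>" .
  qed (use \<epsilon> L in simp)
qed

lemma curve_length_le_lipschitz_path:
  assumes g: "lipschitz_path M d g L"
  shows "curve_length d g \<le> ereal L"
  unfolding curve_length_def
proof (rule SUP_least, clarsimp)
  fix n and t :: "nat \<Rightarrow> real"
  assume t01: "\<forall>i\<le>n. 0 \<le> t i \<and> t i \<le> 1" and mono: "\<forall>i<n. t i \<le> t (Suc i)"
  have "(\<Sum>i<n. d (g (t i)) (g (t (Suc i)))) \<le> (\<Sum>i<n. L * (t (Suc i) - t i))"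
  proof (rule sum_mono)
    fix i assume "i \<in> {..<n}"
    then have "t i \<in> {0..1}" "t (Suc i) \<in> {0..1}" "t i \<le> t (Suc i)" using t01 mono by auto
    then show "d (g (t i)) (g (t (Suc i))) \<le> L * (t (Suc i) - t i)"
      using lipschitz_pathD(3)[OF g] by fastforce
  qed
  also have "\<dots> = L * (t n - t 0)"
    by (simp add: sum_lessThan_telescope flip: sum_distrib_left)
  also have "\<dots> \<le> L"
  proof -
    have "t n \<le> 1" "0 \<le> t 0" using t01 by auto
    then show ?thesis using lipschitz_pathD(1)[OF g] by (intro mult_left_le) auto
  qed
  finally show "(\<Sum>i<n. d (g (t i)) (g (t (Suc i)))) \<le> L" .
qed

lemma quasiconvexI_approx:
  assumes "\<And>x y \<epsilon>. x \<in> M \<Longrightarrow> y \<in> M \<Longrightarrow> 0 < \<epsilon> \<Longrightarrow>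
     \<exists>g L. lipschitz_path M d g L \<and> g 0 = x \<and> g 1 = y \<and> L \<le> C * d x y + \<epsilon>"
  shows "quasiconvex C M d"
  unfolding quasiconvex_def
proof (intro ballI)
  fix x y assume xy: "x \<in> M" "y \<in> M"
  show "intrinsic_dist M d x y \<le> ereal (C * d x y)"
  proof (rule ereal_le_epsilon2)
    fix \<epsilon> :: real assume "0 < \<epsilon>"
    then obtain g L where g: "lipschitz_path M d g L" "g 0 = x" "g 1 = y" "L \<le> C * d x y + \<epsilon>"
      using assms[OF xy] by blast
    have "intrinsic_dist M d x y \<le> curve_length d g"
      unfolding intrinsic_dist_def using g lipschitz_path_mcurve by (intro INF_lower) auto
    also have "\<dots> \<le> ereal L" by (rule curve_length_le_lipschitz_path[OF g(1)])
    also have "\<dots> \<le> ereal (C * d x y) + ereal \<epsilon>" using g(4) by simp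
    finally show "intrinsic_dist M d x y \<le> ereal (C * d x y) + ereal \<epsilon>" .
  qed
qed

lemma quasiconvex_if_lipschitz_connected:
  assumes "lipschitz_connected C M d"
  shows "quasiconvex C M d"
  by (rule quasiconvexI_approx)
     (use assms in \<open>fastforce simp: lipschitz_connected_def\<close>)

lemma lipschitz_path_mono: "lipschitz_path M d g L \<Longrightarrow> L \<le> L' \<Longrightarrow> lipschitz_path M d g L'"
  unfolding lipschitz_path_def by (meson abs_ge_zero mult_right_mono order.trans)

lemma lipschitz_path_subset: "lipschitz_path A d g L \<Longrightarrow> A \<subseteq> B \<Longrightarrow> lipschitz_path B d g L"
  unfolding lipschitz_path_def by auto

lemma lipschitz_path_reverse: "lipschitz_path M d g L \<Longrightarrow> lipschitz_path M d (\<lambda>t. g (1 - t)) L"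
  unfolding lipschitz_path_def by (smt (verit) atLeastAtMost_iff)

lemma lipschitz_path_isometric_image:
  assumes g: "lipschitz_path M d g L" and f: "f ` M \<subseteq> M'"
    and iso: "\<And>x y. x \<in> M \<Longrightarrow> y \<in> M \<Longrightarrow> d' (f x) (f y) = d x y"
  shows "lipschitz_path M' d' (f \<circ> g) L"
  using g f unfolding lipschitz_path_def by (auto simp: iso)

context Metric_space
begin

lemma lipschitz_path_const: "x \<in> M \<Longrightarrow> lipschitz_path M d (\<lambda>_. x) 0"
  unfolding lipschitz_path_def by simp

lemma lipschitz_path_0_const:
  assumes "lipschitz_path M d g 0"
  shows "g 1 = g 0"
proof -
  have "g 1 \<in> M" "g 0 \<in> M" "d (g 1) (g 0) \<le> 0"
    using lipschitz_pathD(2,3)[OF assms] by force+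
  then show ?thesis by (metis nonneg order_antisym zero)
qed

lemma lipschitz_on_Icc_join:
  assumes "a \<le> b" "b \<le> c" and inM: "\<And>t. t \<in> {a..c} \<Longrightarrow> g t \<in> M"
    and left: "\<forall>s\<in>{a..b}. \<forall>t\<in>{a..b}. d (g s) (g t) \<le> L * \<bar>s - t\<bar>"
    and right: "\<forall>s\<in>{b..c}. \<forall>t\<in>{b..c}. d (g s) (g t) \<le> L * \<bar>s - t\<bar>"
  shows "\<forall>s\<in>{a..c}. \<forall>t\<in>{a..c}. d (g s) (g t) \<le> L * \<bar>s - t\<bar>"
proof -
  have ordered: "d (g s) (g t) \<le> L * \<bar>s - t\<bar>" if "s \<in> {a..c}" "t \<in> {a..c}" "s \<le> t" for s t
  proof -
    consider "t \<le> b" | "b \<le> s" | "s < b" "b < t" by linarith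
    then show ?thesis
    proof cases
      case 1
      then have "s \<in> {a..b}" "t \<in> {a..b}" using that by auto
      then show ?thesis using left by blast
    next
      case 2
      then have "s \<in> {b..c}" "t \<in> {b..c}" using that by auto
      then show ?thesis using right by blast
    next
      case 3
      then have "d (g s) (g t) \<le> d (g s) (g b) + d (g b) (g t)"
        using that assms(1,2) by (intro triangle inM) auto
      also have "\<dots> \<le> L * \<bar>s - b\<bar> + L * \<bar>b - t\<bar>"
        using left[rule_format, of s b] right[rule_format, of b t] 3 that by (intro add_mono) auto
      also have "\<dots> = L * \<bar>s - t\<bar>" using 3 by (simp add: abs_if algebra_simps)
      finally show ?thesis .
    qed
  qed
  show ?thesis
    using ordered ordered[of t s for s t] by (metis abs_minus_commute commute linorder_le_cases)
qed

lemma lipschitz_path_rescale: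
  assumes g: "lipschitz_path M d g L" and ab: "a < b" and st: "s \<in> {a..b}" "t \<in> {a..b}"
  shows "d (g ((s - a) / (b - a))) (g ((t - a) / (b - a))) \<le> L / (b - a) * \<bar>s - t\<bar>"
proof -
  have "(s - a) / (b - a) \<in> {0..1}" "(t - a) / (b - a) \<in> {0..1}" using ab st by auto
  then have "d (g ((s - a) / (b - a))) (g ((t - a) / (b - a)))
      \<le> L * \<bar>(s - a) / (b - a) - (t - a) / (b - a)\<bar>"
    by (rule lipschitz_pathD(3)[OF g])
  also have "\<dots> = L / (b - a) * \<bar>s - t\<bar>"
    using ab by (simp add: abs_divide flip: diff_divide_distrib)
  finally show ?thesis .
qed

end

definition path_join :: "real \<Rightarrow> (real \<Rightarrow> 'a) \<Rightarrow> (real \<Rightarrow> 'a) \<Rightarrow> real \<Rightarrow> 'a" where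
  "path_join w g1 g2 t = (if t \<le> w then g1 (t / w) else g2 ((t - w) / (1 - w)))"

lemma (in Metric_space) lipschitz_path_join_at:
  assumes g1: "lipschitz_path M d g1 L1" and g2: "lipschitz_path M d g2 L2"
    and meet: "g1 1 = g2 0" and w: "0 < w" "w < 1"
    and L: "L1 \<le> w * L" "L2 \<le> (1 - w) * L"
  shows "lipschitz_path M d (path_join w g1 g2) L"
proof -
  let ?g = "path_join w g1 g2"
  have g_right: "?g t = g2 ((t - w) / (1 - w))" if "w \<le> t" for t
    using that meet w by (cases "t = w") (auto simp: path_join_def)
  have inM: "?g t \<in> M" if "t \<in> {0..1}" for t
    using that w lipschitz_pathD(2)[OF g1, of "t / w"] lipschitz_pathD(2)[OF g2, of "(t - w) / (1 - w)"]
    by (auto simp: path_join_def field_simps)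
  have left: "d (?g s) (?g t) \<le> L * \<bar>s - t\<bar>" if "s \<in> {0..w}" "t \<in> {0..w}" for s t
  proof -
    have "d (?g s) (?g t) \<le> L1 / w * \<bar>s - t\<bar>"
      using lipschitz_path_rescale[OF g1, of 0 w s t] that w by (simp add: path_join_def)
    also have "\<dots> \<le> L * \<bar>s - t\<bar>" using L w by (intro mult_right_mono) (simp_all add: field_simps)
    finally show ?thesis .
  qed
  have right: "d (?g s) (?g t) \<le> L * \<bar>s - t\<bar>" if "s \<in> {w..1}" "t \<in> {w..1}" for s t
  proof -
    have "d (?g s) (?g t) \<le> L2 / (1 - w) * \<bar>s - t\<bar>"
      using lipschitz_path_rescale[OF g2, of w 1 s t] that w by (simp add: g_right)
    also have "\<dots> \<le> L * \<bar>s - t\<bar>" using L w by (intro mult_right_mono) (simp_all add: field_simps)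
    finally show ?thesis .
  qed
  have "\<forall>s\<in>{0..1}. \<forall>t\<in>{0..1}. d (?g s) (?g t) \<le> L * \<bar>s - t\<bar>"
    by (rule lipschitz_on_Icc_join[of 0 w 1]) (use w inM left right in auto)
  moreover have "0 \<le> L"
  proof -
    have "0 \<le> w * L" using L(1) lipschitz_pathD(1)[OF g1] by linarith
    then show ?thesis using w by (simp add: zero_le_mult_iff)
  qed
  ultimately show ?thesis using inM by (simp add: lipschitz_path_def)
qed

lemma (in Metric_space) lipschitz_path_join:
  assumes g1: "lipschitz_path M d g1 L1" and g2: "lipschitz_path M d g2 L2" and meet: "g1 1 = g2 0"
  shows "\<exists>g. lipschitz_path M d g (L1 + L2) \<and> g 0 = g1 0 \<and> g 1 = g2 1"
proof -
  have L: "0 \<le> L1" "0 \<le> L2" using g1 g2 by (auto dest: lipschitz_pathD(1))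
  consider "L1 = 0" | "L2 = 0" | "0 < L1" "0 < L2" using L by linarith
  then show ?thesis
  proof cases
    case 1
    then show ?thesis using g2 meet lipschitz_path_0_const[OF g1[unfolded 1]] by auto
  next
    case 2
    then show ?thesis using g1 meet lipschitz_path_0_const[OF g2[unfolded 2]] by auto
  next
    case 3
    define w where "w = L1 / (L1 + L2)"
    have w: "0 < w" "w < 1" "L1 = w * (L1 + L2)" "L2 = (1 - w) * (L1 + L2)"
      using 3 by (auto simp: w_def field_simps)
    have "lipschitz_path M d (path_join w g1 g2) (L1 + L2)"
      using w by (intro lipschitz_path_join_at[OF g1 g2 meet]) auto
    moreover have "path_join w g1 g2 0 = g1 0" "path_join w g1 g2 1 = g2 1"
      using w by (simp_all add: path_join_def)
    ultimately show ?thesis by blast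
  qed
qed

lemma (in Metric_space) lipschitz_path_join3:
  assumes "lipschitz_path M d g1 L1" "lipschitz_path M d g2 L2" "lipschitz_path M d g3 L3"
    and "g1 1 = g2 0" "g2 1 = g3 0"
  shows "\<exists>g. lipschitz_path M d g (L1 + L2 + L3) \<and> g 0 = g1 0 \<and> g 1 = g3 1"
proof -
  obtain h where h: "lipschitz_path M d h (L1 + L2)" "h 0 = g1 0" "h 1 = g2 1"
    using lipschitz_path_join[OF assms(1,2,4)] by blast
  show ?thesis using lipschitz_path_join[OF h(1) assms(3)] h assms(5) by auto
qed

section \<open>Paths assembled along dyadic blocks\<close>

definition dyadic :: "nat \<Rightarrow> real" where
  "dyadic m = 1 - 1 / 2 ^ m"

lemma dyadic_0 [simp]: "dyadic 0 = 0"
  by (simp add: dyadic_def)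

lemma dyadic_bounds: "0 \<le> dyadic m" "dyadic m < 1"
  by (simp_all add: dyadic_def)

lemma dyadic_le_iff [simp]: "dyadic m \<le> dyadic n \<longleftrightarrow> m \<le> n"
  by (simp add: dyadic_def field_simps)

lemma dyadic_less_iff [simp]: "dyadic m < dyadic n \<longleftrightarrow> m < n"
  by (simp add: dyadic_def field_simps)

lemma dyadic_Suc: "dyadic (Suc m) = dyadic m + 1 / 2 ^ Suc m"
  by (simp add: dyadic_def field_simps)

lemma dyadic_tendsto_1: "dyadic \<longlonglongrightarrow> 1"
proof -
  have "(\<lambda>m. 1 - (1 / 2 :: real) ^ m) \<longlonglongrightarrow> 1 - 0"
    by (intro tendsto_diff tendsto_const LIMSEQ_realpow_zero) auto
  then show ?thesis unfolding dyadic_def[abs_def] by (simp add: power_one_over)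
qed

lemma dyadic_block_exists:
  assumes "0 \<le> s" "s < 1"
  obtains m where "dyadic m \<le> s" "s < dyadic (Suc m)"
proof -
  obtain n where n: "s < dyadic n"
    using order_tendstoD(1)[OF dyadic_tendsto_1 assms(2)] by (auto simp: eventually_sequentially)
  define m where "m = (LEAST n. s < dyadic n)"
  have "s < dyadic m" unfolding m_def by (rule LeastI[of "\<lambda>n. s < dyadic n", OF n])
  moreover obtain k where "m = Suc k"
    using \<open>s < dyadic m\<close> assms(1) by (cases m) auto
  moreover have "\<not> s < dyadic k"
    using \<open>m = Suc k\<close> not_less_Least[of k "\<lambda>n. s < dyadic n"] by (simp add: m_def)
  ultimately show ?thesis using that[of k] by auto
qed

lemma dyadic_cases:
  assumes "s \<in> {0..1}"
  obtains m where "s \<in> {dyadic m..dyadic (Suc m)}" | "s = 1"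
proof (cases "s = 1")
  case False
  then obtain m where "dyadic m \<le> s" "s < dyadic (Suc m)"
    using assms dyadic_block_exists[of s] by auto
  then show ?thesis using that(1)[of m] by auto
qed (use that(2) in simp)

definition dyadic_block :: "real \<Rightarrow> nat" where
  "dyadic_block s = (LEAST m. s < dyadic (Suc m))"

lemma dyadic_block_eq:
  assumes "dyadic m \<le> s" "s < dyadic (Suc m)"
  shows "dyadic_block s = m"
  unfolding dyadic_block_def
proof (rule Least_equality)
  fix n assume "s < dyadic (Suc n)"
  then have "dyadic m < dyadic (Suc n)" using assms(1) by linarith
  then show "m \<le> n" by simp
qed (rule assms(2))

lemma (in Metric_space) lipschitz_before_1_dyadic_blocks:
  assumes inM: "\<And>t. t \<in> {0..1} \<Longrightarrow> g t \<in> M"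
    and block: "\<And>m s t. s \<in> {dyadic m..dyadic (Suc m)} \<Longrightarrow> t \<in> {dyadic m..dyadic (Suc m)} \<Longrightarrow>
        d (g s) (g t) \<le> L * \<bar>s - t\<bar>"
    and st: "s \<in> {0..<1}" "t \<in> {0..<1}"
  shows "d (g s) (g t) \<le> L * \<bar>s - t\<bar>"
proof -
  have initial: "\<forall>s\<in>{0..dyadic m}. \<forall>t\<in>{0..dyadic m}. d (g s) (g t) \<le> L * \<bar>s - t\<bar>" for m
  proof (induction m)
    case 0
    then show ?case using inM[of 0] by simp
  next
    case (Suc m)
    show ?case
      by (rule lipschitz_on_Icc_join[of 0 "dyadic m"])
         (use Suc.IH block inM dyadic_bounds[of m] dyadic_bounds[of "Suc m"] in auto)
  qed
  obtain m n where "s < dyadic (Suc m)" "t < dyadic (Suc n)"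
    using st dyadic_block_exists[of s] dyadic_block_exists[of t] by (metis atLeastLessThan_iff)
  moreover have "dyadic (Suc m) \<le> dyadic (Suc (max m n))" "dyadic (Suc n) \<le> dyadic (Suc (max m n))"
    by simp_all
  ultimately have "s \<in> {0..dyadic (Suc (max m n))}" "t \<in> {0..dyadic (Suc (max m n))}"
    using st by (auto simp del: dyadic_le_iff)
  then show ?thesis using initial by blast
qed

lemma (in Metric_space) lipschitz_path_dyadic_blocks:
  assumes L: "0 \<le> L" and inM: "\<And>t. t \<in> {0..1} \<Longrightarrow> g t \<in> M"
    and block: "\<And>m s t. s \<in> {dyadic m..dyadic (Suc m)} \<Longrightarrow> t \<in> {dyadic m..dyadic (Suc m)} \<Longrightarrow>
        d (g s) (g t) \<le> L * \<bar>s - t\<bar>"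
    and tendsto_end: "(\<lambda>m. d (g (dyadic m)) (g 1)) \<longlonglongrightarrow> 0"
  shows "lipschitz_path M d g L"
proof -
  have before_end: "d (g s) (g t) \<le> L * \<bar>s - t\<bar>" if "s \<in> {0..<1}" "t \<in> {0..<1}" for s t
    using lipschitz_before_1_dyadic_blocks[OF inM block that] .
  have to_end: "d (g s) (g 1) \<le> L * (1 - s)" if s: "s \<in> {0..<1}" for s
  proof (rule tendsto_le[OF _ _ tendsto_const])
    show "(\<lambda>m. L * (dyadic m - s) + d (g (dyadic m)) (g 1)) \<longlonglongrightarrow> L * (1 - s)"
      using tendsto_add[OF tendsto_mult[OF tendsto_const tendsto_diff[OF dyadic_tendsto_1 tendsto_const]]
          tendsto_end] by simp
    obtain m where m: "s < dyadic (Suc m)"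
      using s dyadic_block_exists[of s] by (metis atLeastLessThan_iff)
    show "\<forall>\<^sub>F n in sequentially. d (g s) (g 1) \<le> L * (dyadic n - s) + d (g (dyadic n)) (g 1)"
      unfolding eventually_sequentially
    proof (intro exI[of _ "Suc m"] allI impI)
      fix n assume "Suc m \<le> n"
      then have sn: "s \<le> dyadic n" using m dyadic_le_iff[of "Suc m" n] by linarith
      have "d (g s) (g 1) \<le> d (g s) (g (dyadic n)) + d (g (dyadic n)) (g 1)"
        using s dyadic_bounds[of n] by (intro triangle inM) auto
      also have "d (g s) (g (dyadic n)) \<le> L * (dyadic n - s)"
        using before_end[of s "dyadic n"] s sn dyadic_bounds[of n] by auto
      finally show "d (g s) (g 1) \<le> L * (dyadic n - s) + d (g (dyadic n)) (g 1)" by simp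
    qed
  qed simp
  have "d (g s) (g t) \<le> L * \<bar>s - t\<bar>" if "s \<in> {0..1}" "t \<in> {0..1}" for s t
  proof (cases "s = 1 \<or> t = 1")
    case True
    then show ?thesis
      using to_end[of s] to_end[of t] that inM by (cases "s = t") (auto simp: commute)
  next
    case False
    then show ?thesis using before_end that by auto
  qed
  then show ?thesis using L inM by (simp add: lipschitz_path_def)
qed

definition dyadic_concat :: "(nat \<Rightarrow> real \<Rightarrow> 'a) \<Rightarrow> 'a \<Rightarrow> real \<Rightarrow> 'a" where
  "dyadic_concat c z t = (if 1 \<le> t then z else
     (let m = dyadic_block t in c m ((t - dyadic m) / (dyadic (Suc m) - dyadic m))))"

lemma dyadic_concat_on_block:
  assumes meet: "\<And>m. c m 1 = c (Suc m) 0" and t: "t \<in> {dyadic m..dyadic (Suc m)}"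
  shows "dyadic_concat c z t = c m ((t - dyadic m) / (dyadic (Suc m) - dyadic m))"
proof (cases "t = dyadic (Suc m)")
  case True
  then have "dyadic_concat c z t = c (Suc m) 0"
    using dyadic_block_eq[of "Suc m" t] dyadic_bounds(2)[of "Suc m"] by (simp add: dyadic_concat_def)
  then show ?thesis using True meet by (simp add: dyadic_Suc)
next
  case False
  then show ?thesis
    using t dyadic_block_eq[of m t] dyadic_bounds(2)[of "Suc m"] by (simp add: dyadic_concat_def)
qed

lemma dyadic_concat_dyadic: "(\<And>m. c m 1 = c (Suc m) 0) \<Longrightarrow> dyadic_concat c z (dyadic m) = c m 0"
  using dyadic_concat_on_block[of c "dyadic m" m z] by simp

lemma dyadic_concat_1 [simp]: "dyadic_concat c z 1 = z"
  by (simp add: dyadic_concat_def)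

lemma (in Metric_space) lipschitz_path_dyadic_concat:
  assumes c: "\<And>m. lipschitz_path M d (c m) (L / 2 ^ Suc m)" and meet: "\<And>m. c m 1 = c (Suc m) 0"
    and z: "z \<in> M" and lim: "(\<lambda>m. d (c m 0) z) \<longlonglongrightarrow> 0"
  shows "lipschitz_path M d (dyadic_concat c z) L"
proof (rule lipschitz_path_dyadic_blocks)
  show "0 \<le> L" using lipschitz_pathD(1)[OF c[of 0]] by simp
  have rescaled: "(t - dyadic m) / (dyadic (Suc m) - dyadic m) \<in> {0..1}"
    if "t \<in> {dyadic m..dyadic (Suc m)}" for m t
    using that by (auto simp: dyadic_Suc field_simps)
  show "dyadic_concat c z t \<in> M" if "t \<in> {0..1}" for t
    using that
  proof (cases rule: dyadic_cases)
    case (1 m)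
    then show ?thesis
      using dyadic_concat_on_block[where c = c, OF meet] rescaled lipschitz_pathD(2)[OF c] by metis
  qed (simp add: z)
  show "d (dyadic_concat c z s) (dyadic_concat c z t) \<le> L * \<bar>s - t\<bar>"
    if "s \<in> {dyadic m..dyadic (Suc m)}" "t \<in> {dyadic m..dyadic (Suc m)}" for m s t
    using lipschitz_path_rescale[OF c[of m] _ that] dyadic_concat_on_block[where c = c, OF meet that(1)]
      dyadic_concat_on_block[where c = c, OF meet that(2)]
    by (simp add: dyadic_Suc)
  show "(\<lambda>m. d (dyadic_concat c z (dyadic m)) (dyadic_concat c z 1)) \<longlonglongrightarrow> 0"
    using lim by (simp add: dyadic_concat_dyadic[where c = c, OF meet])
qed

section \<open>The curve gamma and the arc metrics theta_r\<close>

definition fsupp :: "(nat \<Rightarrow> real) \<Rightarrow> bool" where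
  "fsupp f \<longleftrightarrow> finite {i. f i \<noteq> 0}"

lemma theta_eq_sum:
  assumes "finite F" "\<And>i. i \<notin> F \<Longrightarrow> x i = 0 \<and> y i = 0"
  shows "theta x y = (\<Sum>i\<in>F. \<bar>x i - y i\<bar>)"
  unfolding theta_def by (rule suminf_finite) (use assms in auto)

lemma theta_coord:
  assumes "fsupp x" "fsupp y"
  shows "\<bar>x i - y i\<bar> \<le> theta x y"
proof -
  let ?F = "insert i ({j. x j \<noteq> 0} \<union> {j. y j \<noteq> 0})"
  have fin: "finite ?F" using assms by (simp add: fsupp_def)
  have "\<bar>x i - y i\<bar> \<le> (\<Sum>j\<in>?F. \<bar>x j - y j\<bar>)" by (rule member_le_sum) (use fin in auto)
  also have "\<dots> = theta x y" by (rule theta_eq_sum[OF fin, symmetric]) auto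
  finally show ?thesis .
qed

lemma theta_nonneg:
  assumes "fsupp x" "fsupp y"
  shows "0 \<le> theta x y"
  using theta_coord[OF assms, of 0] by linarith

(* theta is a junk value off finitely supported sequences; the absolute value makes it
   nonnegative everywhere, as Metric_space demands. *)
lemma metric_theta: "Metric_space (Collect fsupp) (\<lambda>x y. \<bar>theta x y\<bar>)"
proof
  fix x y z assume x: "x \<in> Collect fsupp" and y: "y \<in> Collect fsupp" and z: "z \<in> Collect fsupp"
  let ?F = "{i. x i \<noteq> 0} \<union> {i. y i \<noteq> 0} \<union> {i. z i \<noteq> 0}"
  have fin: "finite ?F" using x y z by (auto simp: fsupp_def)
  have sums: "theta u v = (\<Sum>i\<in>?F. \<bar>u i - v i\<bar>)" if "u \<in> {x, y, z}" "v \<in> {x, y, z}" for u v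
    by (rule theta_eq_sum[OF fin]) (use that in auto)
  show "\<bar>theta x y\<bar> = 0 \<longleftrightarrow> x = y"
  proof
    assume "\<bar>theta x y\<bar> = 0"
    then have "\<bar>x i - y i\<bar> \<le> 0" for i using theta_coord[of x y i] x y by simp
    then show "x = y" by (simp add: fun_eq_iff)
  qed (simp add: theta_def)
  show "\<bar>theta x z\<bar> \<le> \<bar>theta x y\<bar> + \<bar>theta y z\<bar>"
    by (simp add: sums sum_nonneg sum_mono flip: sum.distrib)
qed (simp_all add: theta_def abs_minus_commute)

lemma Least_dyadic_eq:
  assumes "dyadic m \<le> s" "s < dyadic (Suc m)"
  shows "(LEAST n::nat. 1 \<le> n \<and> s < 1 - 1 / 2 ^ n) = Suc m"
proof (rule Least_equality)
  show "1 \<le> Suc m \<and> s < 1 - 1 / 2 ^ Suc m" using assms(2) by (simp add: dyadic_def)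
  fix n assume "1 \<le> n \<and> s < 1 - 1 / 2 ^ n"
  then have "dyadic m < dyadic n" using assms(1) by (simp add: dyadic_def)
  then show "Suc m \<le> n" by simp
qed

lemma gamma_on_block_open:
  assumes "dyadic m \<le> s" "s < dyadic (Suc m)"
  shows "gamma s = (\<lambda>i. if i = 1 then s / 2
    else if i = m + 2 then alpha (2 ^ Suc m * (s - dyadic m)) / 2 ^ (m + 2) else 0)"
proof -
  define t where "t = 2 ^ Suc m * (s - dyadic m)"
  have "s < 1" using assms(2) dyadic_bounds(2) by (rule less_trans)
  then have "gamma s = (\<lambda>i. xpt (Suc m) i + (1/2) ^ (Suc m + 1) * (t * e 1 i + alpha t * e (Suc m + 1) i))"
    unfolding gamma_def Least_dyadic_eq[OF assms] Let_def by (simp add: t_def dyadic_def)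
  moreover have "(1/2 - 1/2 ^ Suc m) + (1/2) ^ (Suc m + 1) * t = s / 2"
  proof -
    have "(1/2::real) ^ (Suc m + 1) * 2 ^ Suc m = 1/2" by (simp add: power_one_over)
    then have "(1/2::real) ^ (Suc m + 1) * t = (s - dyadic m) / 2"
      unfolding t_def by (metis mult.assoc times_divide_eq_right mult_1 mult.commute)
    then show ?thesis by (simp add: dyadic_def field_simps)
  qed
  moreover have "(1/2) ^ (Suc m + 1) * alpha t = alpha t / 2 ^ (m + 2)"
    by (simp add: power_one_over)
  ultimately show ?thesis by (auto simp: fun_eq_iff xpt_def e_def t_def)
qed

lemma gamma_on_block:
  assumes "s \<in> {dyadic m..dyadic (Suc m)}"
  shows "gamma s = (\<lambda>i. if i = 1 then s / 2
    else if i = m + 2 then alpha (2 ^ Suc m * (s - dyadic m)) / 2 ^ (m + 2) else 0)"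
proof (cases "s = dyadic (Suc m)")
  case True
  have "2 ^ Suc m * (s - dyadic m) = 1" "2 ^ Suc (Suc m) * (s - dyadic (Suc m)) = (0::real)"
    using True by (simp_all add: dyadic_Suc)
  then show ?thesis
    using gamma_on_block_open[of "Suc m" s] True by (simp add: alpha_def fun_eq_iff)
qed (use assms gamma_on_block_open in auto)

lemma gamma_1: "gamma 1 = (\<lambda>i. if i = 1 then 1 / 2 else 0)"
  by (simp add: gamma_def xinf_def e_def fun_eq_iff)

lemma fsupp_gamma: "fsupp (gamma s)"
proof -
  define n where "n = (LEAST n::nat. 1 \<le> n \<and> s < 1 - 1 / 2 ^ n)"
  have "{i. gamma s i \<noteq> 0} \<subseteq> {1, n + 1}"
    unfolding gamma_def Let_def n_def by (auto simp: xpt_def xinf_def e_def)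
  then show ?thesis unfolding fsupp_def by (rule finite_subset) simp
qed

lemma gamma_coord_1: "s \<in> {0..1} \<Longrightarrow> gamma s 1 = s / 2"
  by (erule dyadic_cases) (auto simp: gamma_on_block gamma_1)

lemma theta_gamma_on_block:
  assumes st: "s \<in> {dyadic m..dyadic (Suc m)}" "t \<in> {dyadic m..dyadic (Suc m)}"
  shows "theta (gamma s) (gamma t) \<le> \<bar>s - t\<bar>"
proof -
  define a where "a u = 2 ^ Suc m * (u - dyadic m)" for u :: real
  have "theta (gamma s) (gamma t) = \<bar>s / 2 - t / 2\<bar> + \<bar>alpha (a s) - alpha (a t)\<bar> / 2 ^ (m + 2)"
    by (subst theta_eq_sum[of "{1, m + 2}"])
       (auto simp: gamma_on_block[OF st(1)] gamma_on_block[OF st(2)] a_def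
          simp flip: diff_divide_distrib)
  also have "\<dots> \<le> \<bar>s / 2 - t / 2\<bar> + 2 ^ Suc m * \<bar>s - t\<bar> / 2 ^ (m + 2)"
  proof -
    have "\<bar>alpha (a s) - alpha (a t)\<bar> \<le> \<bar>a s - a t\<bar>" by (auto simp: alpha_def)
    also have "\<bar>a s - a t\<bar> = 2 ^ Suc m * \<bar>s - t\<bar>"
      by (simp add: a_def abs_mult flip: right_diff_distrib)
    finally have "\<bar>alpha (a s) - alpha (a t)\<bar> / 2 ^ (m + 2) \<le> 2 ^ Suc m * \<bar>s - t\<bar> / 2 ^ (m + 2)"
      by (rule divide_right_mono) simp
    then show ?thesis by (rule add_left_mono)
  qed
  also have "\<dots> = \<bar>s - t\<bar>"
    by (simp add: abs_divide flip: diff_divide_distrib)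
  finally show ?thesis .
qed

lemma lipschitz_path_gamma: "lipschitz_path (Collect fsupp) (\<lambda>x y. \<bar>theta x y\<bar>) gamma 1"
proof (rule Metric_space.lipschitz_path_dyadic_blocks[OF metric_theta])
  have "(\<lambda>m. \<bar>theta (gamma (dyadic m)) (gamma 1)\<bar>) = (\<lambda>m. (1 - dyadic m) / 2)"
  proof
    fix m
    have "gamma (dyadic m) = (\<lambda>i. if i = 1 then dyadic m / 2 else 0)"
      using gamma_on_block[of "dyadic m" m] by (auto simp: fun_eq_iff alpha_def)
    then have "theta (gamma (dyadic m)) (gamma 1) = \<bar>dyadic m / 2 - 1 / 2\<bar>"
      by (subst theta_eq_sum[of "{1}"]) (auto simp: gamma_1)
    then show "\<bar>theta (gamma (dyadic m)) (gamma 1)\<bar> = (1 - dyadic m) / 2"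
      using dyadic_bounds(2)[of m] by simp
  qed
  moreover have "(\<lambda>m. (1 - dyadic m) / 2) \<longlonglongrightarrow> (1 - 1) / 2"
    by (intro tendsto_divide tendsto_diff tendsto_const dyadic_tendsto_1) simp
  ultimately show "(\<lambda>m. \<bar>theta (gamma (dyadic m)) (gamma 1)\<bar>) \<longlonglongrightarrow> 0"
    by simp
qed (auto simp: fsupp_gamma theta_nonneg theta_gamma_on_block)

lemma theta_gamma_bounds:
  assumes "s \<in> {0..1}" "t \<in> {0..1}"
  shows "\<bar>s - t\<bar> / 2 \<le> theta (gamma s) (gamma t)" "theta (gamma s) (gamma t) \<le> \<bar>s - t\<bar>"
proof -
  have "\<bar>s / 2 - t / 2\<bar> \<le> theta (gamma s) (gamma t)"
    using theta_coord[of "gamma s" "gamma t" 1, OF fsupp_gamma fsupp_gamma]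
      gamma_coord_1[OF assms(1)] gamma_coord_1[OF assms(2)] by simp
  moreover have "\<bar>s / 2 - t / 2\<bar> = \<bar>s - t\<bar> / 2" by (simp add: abs_divide flip: diff_divide_distrib)
  ultimately show "\<bar>s - t\<bar> / 2 \<le> theta (gamma s) (gamma t)" by linarith
  show "theta (gamma s) (gamma t) \<le> \<bar>s - t\<bar>"
    using order_trans[OF abs_ge_self lipschitz_pathD(3)[OF lipschitz_path_gamma assms]] by simp
qed

lemma theta_triangle:
  assumes "fsupp x" "fsupp y" "fsupp z"
  shows "theta x z \<le> theta x y + theta y z"
  using Metric_space.triangle[OF metric_theta, of x y z] assms theta_nonneg by simp

lemma theta_r_commute: "theta_r r u v = theta_r r v u"
  by (simp add: theta_r_def theta_def abs_minus_commute)

lemma theta_r_self [simp]: "theta_r r u u = 0"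
  by (simp add: theta_r_def theta_def)

lemma theta_r_nonneg: "0 \<le> r \<Longrightarrow> 0 \<le> theta_r r u v"
  by (simp add: theta_r_def theta_nonneg fsupp_gamma)

lemma theta_r_bounds:
  assumes "0 < r" "u \<in> {0..r}" "v \<in> {0..r}"
  shows "\<bar>u - v\<bar> / 2 \<le> theta_r r u v" "theta_r r u v \<le> \<bar>u - v\<bar>"
proof -
  have uv: "u / r \<in> {0..1}" "v / r \<in> {0..1}" using assms by auto
  have scale: "r * \<bar>u / r - v / r\<bar> = \<bar>u - v\<bar>"
    using assms(1) by (simp add: abs_mult flip: diff_divide_distrib)
  show "\<bar>u - v\<bar> / 2 \<le> theta_r r u v"
    using mult_left_mono[OF theta_gamma_bounds(1)[OF uv], of r] assms(1) scale
    by (simp add: theta_r_def)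
  show "theta_r r u v \<le> \<bar>u - v\<bar>"
    using mult_left_mono[OF theta_gamma_bounds(2)[OF uv], of r] assms(1) scale
    by (simp add: theta_r_def)
qed

lemma metric_theta_r:
  assumes "0 < r"
  shows "Metric_space {0..r} (theta_r r)"
proof
  fix u v w assume "u \<in> {0..r}" "v \<in> {0..r}" "w \<in> {0..r}"
  show "theta_r r u v = 0 \<longleftrightarrow> u = v"
    using theta_r_bounds[OF assms \<open>u \<in> {0..r}\<close> \<open>v \<in> {0..r}\<close>] by (auto simp: theta_r_def)
  show "theta_r r u w \<le> theta_r r u v + theta_r r v w"
    using mult_left_mono[OF theta_triangle[OF fsupp_gamma fsupp_gamma fsupp_gamma], of r] assms
    by (simp add: theta_r_def distrib_left)
qed (use assms in \<open>simp_all add: theta_r_nonneg theta_r_commute\<close>)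

lemma lipschitz_path_segment:
  assumes r: "0 < r" and uv: "u \<in> {0..r}" "v \<in> {0..r}" and f: "\<And>s. s \<in> {0..r} \<Longrightarrow> f s \<in> M"
    and iso: "\<And>s t. s \<in> {0..r} \<Longrightarrow> t \<in> {0..r} \<Longrightarrow> d (f s) (f t) = theta_r r s t"
  shows "\<exists>g L. lipschitz_path M d g L \<and> g 0 = f u \<and> g 1 = f v \<and> L \<le> 2 * d (f u) (f v)"
proof (intro exI conjI)
  let ?p = "\<lambda>\<tau>. u + \<tau> * (v - u)"
  have p: "?p \<tau> \<in> {0..r}" if "\<tau> \<in> {0..1}" for \<tau>
  proof -
    have "(1 - \<tau>) *\<^sub>R u + \<tau> *\<^sub>R v \<in> {0..r}"
      using that uv by (intro convexD convex_real_interval) auto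
    then show ?thesis by (simp add: algebra_simps)
  qed
  have "d (f (?p s)) (f (?p t)) \<le> \<bar>v - u\<bar> * \<bar>s - t\<bar>" if "s \<in> {0..1}" "t \<in> {0..1}" for s t
  proof -
    have "d (f (?p s)) (f (?p t)) \<le> \<bar>?p s - ?p t\<bar>"
      using iso[OF p p] theta_r_bounds(2)[OF r p p] that by simp
    also have "\<dots> = \<bar>v - u\<bar> * \<bar>s - t\<bar>" by (simp add: abs_mult mult.commute flip: left_diff_distrib)
    finally show ?thesis .
  qed
  then show "lipschitz_path M d (\<lambda>\<tau>. f (?p \<tau>)) \<bar>v - u\<bar>"
    using f p by (auto simp: lipschitz_path_def)
  show "\<bar>v - u\<bar> \<le> 2 * d (f u) (f v)"
    using theta_r_bounds(1)[OF r uv] iso[OF uv] by (simp add: abs_minus_commute)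
qed simp_all

section \<open>Attaching arcs to a metric space\<close>

lemma (in Metric_space) limitin_eventually_in_finite:
  assumes lim: "limitin mtopology f l sequentially"
    and ev: "eventually (\<lambda>i. f i \<in> F) sequentially" and fin: "finite F"
  shows "eventually (\<lambda>i. f i = l) sequentially"
proof -
  have l: "l \<in> M" using lim limitin_metric by blast
  define \<delta> where "\<delta> = Min (insert 1 (d l ` ((F - {l}) \<inter> M)))"
  have "0 < d l z" if "z \<in> (F - {l}) \<inter> M" for z
    using that l nonneg[of l z] zero[of l z] by force
  then have \<delta>: "0 < \<delta>" using fin by (simp add: \<delta>_def)
  have le: "\<delta> \<le> d l z" if "z \<in> (F - {l}) \<inter> M" for z
    using fin that by (simp add: \<delta>_def)
  have "eventually (\<lambda>i. f i \<in> M \<and> d (f i) l < \<delta>) sequentially"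
    using lim \<delta> limitin_metric by blast
  with ev show ?thesis
    by eventually_elim (metis DiffI IntI commute le linorder_not_le singletonD)
qed

(* The space obtained from M by attaching at each x in QS an arc of length R x, carrying the
   metric theta_r (R x). The point at parameter y of the arc at x is x @ [y]; the points of M
   itself are the feet x @ [0]. This is the step from P_k to P_(k+1). *)
locale glue = Metric_space M d for M :: "real list set" and d +
  fixes QS :: "real list set" and R :: "real list \<Rightarrow> real"
  assumes QS_subset: "QS \<subseteq> M" and R_pos: "\<And>x. x \<in> QS \<Longrightarrow> 0 < R x"
begin

definition glued :: "real list set" where
  "glued = {x @ [0] | x. x \<in> M - QS} \<union> {x @ [y] | x y. x \<in> QS \<and> y \<in> {0..R x}}"

definition height :: "real list \<Rightarrow> real" where
  "height a = (if butlast a \<in> QS then theta_r (R (butlast a)) (last a) 0 else 0)"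

definition glued_dist :: "real list \<Rightarrow> real list \<Rightarrow> real" where
  "glued_dist a b =
     (if butlast a = butlast b \<and> butlast a \<in> QS then theta_r (R (butlast a)) (last a) (last b)
      else height a + d (butlast a) (butlast b) + height b)"

lemma gluedE:
  assumes "a \<in> glued"
  obtains x y where "a = x @ [y]" "x \<in> M" "x \<in> QS \<Longrightarrow> y \<in> {0..R x}" "x \<notin> QS \<Longrightarrow> y = 0"
  using assms QS_subset unfolding glued_def by blast

lemma gluedD:
  assumes "a \<in> glued"
  shows "butlast a \<in> M" "butlast a \<in> QS \<Longrightarrow> last a \<in> {0..R (butlast a)}"
    "a = butlast a @ [last a]" "butlast a \<notin> QS \<Longrightarrow> last a = 0"
  using assms by (auto elim: gluedE)

lemma glued_last_nonneg: "a \<in> glued \<Longrightarrow> 0 \<le> last a"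
  using gluedD(2,4)[of a] by (cases "butlast a \<in> QS") auto

lemma glued_foot: "x \<in> M \<Longrightarrow> x @ [0] \<in> glued"
  using R_pos by (cases "x \<in> QS") (auto simp: glued_def less_imp_le)

lemma glued_arc: "x \<in> QS \<Longrightarrow> y \<in> {0..R x} \<Longrightarrow> x @ [y] \<in> glued"
  by (auto simp: glued_def)

lemma height_nonneg: "0 \<le> height a"
  using R_pos by (simp add: height_def theta_r_nonneg less_imp_le)

lemma height_foot [simp]: "height (x @ [0]) = 0"
  by (simp add: height_def)

lemma height_le_last:
  assumes "a \<in> glued"
  shows "height a \<le> last a"
proof (cases "butlast a \<in> QS")
  case True
  then show ?thesis
    using theta_r_bounds(2)[OF R_pos[OF True] gluedD(2)[OF assms True], of 0] R_pos[OF True]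
      glued_last_nonneg[OF assms]
    by (simp add: height_def)
next
  case False
  then show ?thesis using gluedD(4)[OF assms False] by (simp add: height_def)
qed

lemma glued_dist_arc: "x \<in> QS \<Longrightarrow> glued_dist (x @ [u]) (x @ [v]) = theta_r (R x) u v"
  by (simp add: glued_dist_def)

lemma glued_dist_foot: "x \<in> M \<Longrightarrow> z \<in> M \<Longrightarrow> glued_dist (x @ [0]) (z @ [0]) = d x z"
  by (simp add: glued_dist_def)

lemma glued_dist_to_foot: "a \<in> glued \<Longrightarrow> glued_dist a (butlast a @ [0]) = height a"
  by (auto simp: glued_dist_def height_def elim!: gluedE)

lemma glued_dist_same_arc:
  "butlast a = butlast b \<Longrightarrow> butlast a \<in> QS \<Longrightarrow>
    glued_dist a b = theta_r (R (butlast a)) (last a) (last b)"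
  by (simp add: glued_dist_def)

lemma glued_dist_via_feet:
  "\<not> (butlast a = butlast b \<and> butlast a \<in> QS) \<Longrightarrow>
    glued_dist a b = height a + d (butlast a) (butlast b) + height b"
  unfolding glued_dist_def by (rule if_not_P)

lemma glued_dist_le_via_feet:
  assumes "a \<in> glued" "b \<in> glued"
  shows "glued_dist a b \<le> height a + d (butlast a) (butlast b) + height b"
proof (cases "butlast a = butlast b \<and> butlast a \<in> QS")
  case True
  interpret arc: Metric_space "{0..R (butlast a)}" "theta_r (R (butlast a))"
    using True R_pos by (intro metric_theta_r) auto
  from assms obtain x u y v where "a = x @ [u]" "b = y @ [v]" "u \<in> {0..R x}" "v \<in> {0..R y}" "x \<in> M"
    using True by (elim gluedE) auto
  then show ?thesis
    using True arc.triangle[of u 0 v] R_pos[of x]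
    by (simp add: glued_dist_def height_def theta_r_commute less_imp_le)
next
  case False
  then show ?thesis by (simp add: glued_dist_via_feet)
qed

lemma height_le_glued_dist:
  assumes "a \<in> glued" "b \<in> glued"
  shows "height a \<le> glued_dist a b + height b"
proof (cases "butlast a = butlast b \<and> butlast a \<in> QS")
  case True
  interpret arc: Metric_space "{0..R (butlast a)}" "theta_r (R (butlast a))"
    using True R_pos by (intro metric_theta_r) auto
  from assms obtain x u y v where "a = x @ [u]" "b = y @ [v]" "u \<in> {0..R x}" "v \<in> {0..R y}"
    using True by (elim gluedE) auto
  then show ?thesis
    using True arc.triangle[of u v 0] R_pos[of x]
    by (simp add: glued_dist_def height_def less_imp_le)
next
  case False
  then show ?thesis by (simp add: glued_dist_via_feet height_nonneg)
qed

lemma glued_dist_commute: "glued_dist a b = glued_dist b a"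
  by (auto simp: glued_dist_def commute theta_r_commute)

lemma glued_dist_triangle:
  assumes a: "a \<in> glued" and b: "b \<in> glued" and c: "c \<in> glued"
  shows "glued_dist a c \<le> glued_dist a b + glued_dist b c"
proof (cases "butlast a = butlast b \<and> butlast b = butlast c \<and> butlast b \<in> QS")
  case True
  interpret arc: Metric_space "{0..R (butlast a)}" "theta_r (R (butlast a))"
    using True R_pos by (intro metric_theta_r) auto
  have x: "butlast b = butlast a" "butlast c = butlast a" "butlast a \<in> QS" using True by auto
  have "glued_dist a c = theta_r (R (butlast a)) (last a) (last c)"
    "glued_dist a b = theta_r (R (butlast a)) (last a) (last b)"
    "glued_dist b c = theta_r (R (butlast a)) (last b) (last c)"
    using x glued_dist_same_arc[of a c] glued_dist_same_arc[of a b] glued_dist_same_arc[of b c]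
    by simp_all
  then show ?thesis using True arc.triangle gluedD(2)[OF a] gluedD(2)[OF b] gluedD(2)[OF c] by auto
next
  case False
  let ?a = "butlast a" and ?b = "butlast b" and ?c = "butlast c"
  have M: "?a \<in> M" "?b \<in> M" "?c \<in> M" using a b c by (auto elim!: gluedE)
  have tri: "d ?a ?c \<le> d ?a ?b + d ?b ?c" using M by (rule triangle)
  consider "?a = ?b" "?a \<in> QS" | "?b = ?c" "?b \<in> QS"
    | "\<not> (?a = ?b \<and> ?a \<in> QS)" "\<not> (?b = ?c \<and> ?b \<in> QS)"
    by blast
  then have "height a + d ?a ?c + height c \<le> glued_dist a b + glued_dist b c"
  proof cases
    case 1
    then show ?thesis
      using False tri height_le_glued_dist[OF a b] M by (simp add: glued_dist_via_feet)
  next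
    case 2
    then show ?thesis
      using False tri height_le_glued_dist[OF c b] M by (simp add: glued_dist_via_feet glued_dist_commute)
  next
    case 3
    then show ?thesis using tri height_nonneg[of b] by (simp add: glued_dist_via_feet)
  qed
  then show ?thesis using glued_dist_le_via_feet[OF a c] by linarith
qed

lemma metric_glued: "Metric_space glued glued_dist"
proof
  show "0 \<le> glued_dist a b" for a b
  proof (cases "butlast a = butlast b \<and> butlast a \<in> QS")
    case True
    then have "glued_dist a b = theta_r (R (butlast a)) (last a) (last b)"
      by (intro glued_dist_same_arc) auto
    then show ?thesis using True by (metis R_pos less_imp_le theta_r_nonneg)
  next
    case False
    then show ?thesis using height_nonneg[of a] height_nonneg[of b] by (simp add: glued_dist_via_feet)
  qed
  show "glued_dist a b = 0 \<longleftrightarrow> a = b" if ab_in: "a \<in> glued" "b \<in> glued" for a b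
  proof
    assume 0: "glued_dist a b = 0"
    obtain x u y v where ab: "a = x @ [u]" "b = y @ [v]" "x \<in> M" "y \<in> M"
      "x \<in> QS \<Longrightarrow> u \<in> {0..R x}" "x \<notin> QS \<Longrightarrow> u = 0"
      "y \<in> QS \<Longrightarrow> v \<in> {0..R y}" "y \<notin> QS \<Longrightarrow> v = 0"
      using gluedE[OF ab_in(1)] gluedE[OF ab_in(2)] by metis
    show "a = b"
    proof (cases "x = y \<and> x \<in> QS")
      case True
      then have "theta_r (R x) u v = 0" using 0 ab glued_dist_arc[of x u v] by auto
      then show ?thesis using True ab Metric_space.zero[OF metric_theta_r[OF R_pos]] by auto
    next
      case False
      then have "height a + d x y + height b = 0" using 0 ab glued_dist_via_feet[of a b] by simp
      then have "d x y = 0" using height_nonneg[of a] height_nonneg[of b] nonneg[of x y] by linarith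
      then show ?thesis using False ab by auto
    qed
  next
    assume "a = b"
    then show "glued_dist a b = 0"
      using gluedD(1)[OF ab_in(1)]
      by (cases "butlast a \<in> QS") (simp_all add: glued_dist_same_arc glued_dist_via_feet height_def)
  qed
qed (auto simp: glued_dist_commute glued_dist_triangle)

end

sublocale glue \<subseteq> G: Metric_space glued glued_dist
  by (rule metric_glued)

context glue
begin

lemma lipschitz_path_lift:
  assumes "lipschitz_path M d g L"
  shows "lipschitz_path glued glued_dist (\<lambda>t. g t @ [0]) L"
proof -
  have "lipschitz_path glued glued_dist ((\<lambda>x. x @ [0]) \<circ> g) L"
    by (rule lipschitz_path_isometric_image[OF assms]) (auto simp: glued_foot glued_dist_foot)
  then show ?thesis by (simp add: o_def)
qed

lemma arc_path:
  assumes "x \<in> QS" "u \<in> {0..R x}" "v \<in> {0..R x}"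
  shows "\<exists>g L. lipschitz_path glued glued_dist g L \<and> g 0 = x @ [u] \<and> g 1 = x @ [v] \<and>
    L \<le> 2 * glued_dist (x @ [u]) (x @ [v])"
  using assms by (intro lipschitz_path_segment[OF R_pos]) (auto simp: glued_arc glued_dist_arc)

lemma descent_path:
  assumes a: "a \<in> glued"
  shows "\<exists>g L. lipschitz_path glued glued_dist g L \<and> g 0 = a \<and> g 1 = butlast a @ [0] \<and>
    L \<le> 2 * height a"
proof -
  obtain x y where xy: "a = x @ [y]" "x \<in> M" "x \<in> QS \<Longrightarrow> y \<in> {0..R x}" "x \<notin> QS \<Longrightarrow> y = 0"
    by (rule gluedE[OF a]) blast
  show ?thesis
  proof (cases "x \<in> QS")
    case True
    then show ?thesis
      using arc_path[of x y 0] xy R_pos[of x] glued_dist_to_foot[OF a] by auto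
  next
    case False
    then show ?thesis
      using G.lipschitz_path_const[OF a] xy height_nonneg[of a] by (intro exI) auto
  qed
qed

lemma lipschitz_connected_glued:
  assumes "lipschitz_connected 2 M d"
  shows "lipschitz_connected 2 glued glued_dist"
  unfolding lipschitz_connected_def
proof (intro ballI)
  fix a b assume a: "a \<in> glued" and b: "b \<in> glued"
  show "\<exists>g L. lipschitz_path glued glued_dist g L \<and> g 0 = a \<and> g 1 = b \<and> L \<le> 2 * glued_dist a b"
  proof (cases "butlast a = butlast b \<and> butlast a \<in> QS")
    case True
    then show ?thesis
      using arc_path[of "butlast a" "last a" "last b"] gluedD(2,3)[OF a] gluedD(2,3)[OF b] by auto
  next
    case False
    obtain g1 L1 where g1: "lipschitz_path glued glued_dist g1 L1" "g1 0 = a"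
      "g1 1 = butlast a @ [0]" "L1 \<le> 2 * height a"
      using descent_path[OF a] by blast
    obtain g3 L3 where g3: "lipschitz_path glued glued_dist g3 L3" "g3 0 = b"
      "g3 1 = butlast b @ [0]" "L3 \<le> 2 * height b"
      using descent_path[OF b] by blast
    obtain g2 L2 where g2: "lipschitz_path M d g2 L2" "g2 0 = butlast a" "g2 1 = butlast b"
      "L2 \<le> 2 * d (butlast a) (butlast b)"
      using assms gluedD(1)[OF a] gluedD(1)[OF b] unfolding lipschitz_connected_def by blast
    obtain g where "lipschitz_path glued glued_dist g (L1 + L2 + L3)" "g 0 = a" "g 1 = b"
      using G.lipschitz_path_join3[OF g1(1) lipschitz_path_lift[OF g2(1)] lipschitz_path_reverse[OF g3(1)]]
        g1 g2 g3 by auto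
    moreover have "L1 + L2 + L3 \<le> 2 * glued_dist a b"
      using g1(4) g2(4) g3(4) False by (simp add: glued_dist_via_feet)
    ultimately show ?thesis by blast
  qed
qed

lemma limitin_glued_foot:
  assumes \<sigma>: "range \<sigma> \<subseteq> glued" and l: "limitin mtopology (\<lambda>i. butlast (\<sigma> i)) l sequentially"
    and last: "(\<lambda>i. last (\<sigma> i)) \<longlonglongrightarrow> 0"
  shows "limitin G.mtopology \<sigma> (l @ [0]) sequentially"
proof -
  have lM: "l \<in> M" and dl: "(\<lambda>i. d (butlast (\<sigma> i)) l) \<longlonglongrightarrow> 0"
    using l by (auto simp: limitin_metric_dist_null)
  have "glued_dist (\<sigma> i) (l @ [0]) \<le> last (\<sigma> i) + d (butlast (\<sigma> i)) l" for i
  proof -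
    have "\<sigma> i \<in> glued" using \<sigma> by blast
    then show ?thesis
      using glued_dist_le_via_feet[of "\<sigma> i" "l @ [0]"] height_le_last[of "\<sigma> i"] glued_foot[OF lM]
      by simp
  qed
  then have "(\<lambda>i. glued_dist (\<sigma> i) (l @ [0])) \<longlonglongrightarrow> 0"
    by (intro tendsto_sandwich[OF _ _ tendsto_const tendsto_add_zero[OF last dl]]) auto
  moreover have "\<forall>i. \<sigma> i \<in> glued" using \<sigma> by blast
  ultimately show ?thesis using glued_foot[OF lM] by (simp add: G.limitin_metric_dist_null always_eventually)
qed

lemma limitin_glued_along_arc:
  assumes \<sigma>: "range \<sigma> \<subseteq> glued" and x: "x \<in> QS"
    and ev: "eventually (\<lambda>i. \<sigma> i = x @ [y i]) sequentially"
    and y: "y \<longlonglongrightarrow> y0" and y0: "y0 \<in> {0..R x}"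
  shows "limitin G.mtopology \<sigma> (x @ [y0]) sequentially"
proof -
  have "eventually (\<lambda>i. glued_dist (\<sigma> i) (x @ [y0]) \<le> \<bar>y i - y0\<bar>) sequentially"
    using ev
  proof (rule eventually_mono)
    fix i assume i: "\<sigma> i = x @ [y i]"
    moreover have "\<sigma> i \<in> glued" using \<sigma> by blast
    ultimately have "y i \<in> {0..R x}" using gluedD(2)[of "\<sigma> i"] x by simp
    then show "glued_dist (\<sigma> i) (x @ [y0]) \<le> \<bar>y i - y0\<bar>"
      using i x y0 theta_r_bounds(2)[OF R_pos[OF x]] by (simp add: glued_dist_arc)
  qed
  then have "(\<lambda>i. glued_dist (\<sigma> i) (x @ [y0])) \<longlonglongrightarrow> 0"
    by (intro tendsto_sandwich[OF _ _ tendsto_const tendsto_rabs_zero[OF LIM_zero[OF y]]]) auto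
  moreover have "\<forall>i. \<sigma> i \<in> glued" using \<sigma> by blast
  ultimately show ?thesis
    using glued_arc[OF x y0] by (simp add: G.limitin_metric_dist_null always_eventually)
qed

lemma glued_last_bounded:
  assumes fin: "finite {x \<in> QS. 1 \<le> R x}"
  obtains B where "\<And>a. a \<in> glued \<Longrightarrow> last a \<in> {0..B}"
proof -
  define B where "B = Max (insert 1 (R ` {x \<in> QS. 1 \<le> R x}))"
  have B1: "1 \<le> B" using fin by (simp add: B_def)
  have R: "R x \<le> B" if "x \<in> QS" for x
  proof (cases "1 \<le> R x")
    case True
    then show ?thesis using that fin by (simp add: B_def)
  qed (use B1 in linarith)
  have "last a \<in> {0..B}" if "a \<in> glued" for a
    using gluedD(2,4)[OF that] R[of "butlast a"] B1 by (cases "butlast a \<in> QS") auto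
  then show ?thesis by (rule that)
qed

lemma limitin_glued_away_from_feet:
  assumes fin: "\<And>\<epsilon>. 0 < \<epsilon> \<Longrightarrow> finite {x \<in> QS. \<epsilon> \<le> R x}" and \<sigma>: "range \<sigma> \<subseteq> glued"
    and l: "limitin mtopology (\<lambda>i. butlast (\<sigma> i)) l sequentially"
    and y: "(\<lambda>i. last (\<sigma> i)) \<longlonglongrightarrow> ys" and ys: "0 < ys"
  shows "l @ [ys] \<in> glued" "limitin G.mtopology \<sigma> (l @ [ys]) sequentially"
proof -
  have \<sigma>i: "\<sigma> i \<in> glued" for i using \<sigma> by blast
  have "eventually (\<lambda>i. ys / 2 < last (\<sigma> i)) sequentially"
    using ys by (intro order_tendstoD(1)[OF y]) simp
  then have in_QS: "eventually (\<lambda>i. butlast (\<sigma> i) \<in> {x \<in> QS. ys / 2 \<le> R x}) sequentially"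
  proof (rule eventually_mono)
    fix i assume "ys / 2 < last (\<sigma> i)"
    then show "butlast (\<sigma> i) \<in> {x \<in> QS. ys / 2 \<le> R x}"
      using ys gluedD(2,4)[OF \<sigma>i[of i]] by (cases "butlast (\<sigma> i) \<in> QS") auto
  qed
  have "eventually (\<lambda>i. butlast (\<sigma> i) = l) sequentially"
    using ys by (intro limitin_eventually_in_finite[OF l in_QS fin]) simp
  then have ev: "eventually (\<lambda>i. butlast (\<sigma> i) = l \<and> l \<in> QS) sequentially"
    using in_QS by eventually_elim auto
  then have lQ: "l \<in> QS" by (auto simp: eventually_sequentially)
  have in_arc: "eventually (\<lambda>i. \<sigma> i = l @ [last (\<sigma> i)]) sequentially"
    using ev by eventually_elim (metis \<sigma>i gluedD(3))
  have "eventually (\<lambda>i. last (\<sigma> i) \<le> R l) sequentially"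
    using ev by eventually_elim (metis \<sigma>i gluedD(2) atLeastAtMost_iff)
  then have "ys \<in> {0..R l}" using ys tendsto_upperbound[OF y] by auto
  then show "l @ [ys] \<in> glued" "limitin G.mtopology \<sigma> (l @ [ys]) sequentially"
    using limitin_glued_along_arc[OF \<sigma> lQ in_arc y] glued_arc[OF lQ] by blast+
qed

lemma compact_space_glued:
  assumes cM: "compact_space mtopology" and fin: "\<And>\<epsilon>. 0 < \<epsilon> \<Longrightarrow> finite {x \<in> QS. \<epsilon> \<le> R x}"
  shows "compact_space G.mtopology"
  unfolding G.compact_space_sequentially
proof (intro allI impI)
  fix \<sigma> :: "nat \<Rightarrow> real list" assume \<sigma>: "range \<sigma> \<subseteq> glued"
  obtain B where B: "\<And>a. a \<in> glued \<Longrightarrow> last a \<in> {0..B}" using glued_last_bounded fin[of 1] by auto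
  obtain l r1 where l: "l \<in> M" and r1: "strict_mono r1"
    and lim1: "limitin mtopology ((butlast \<circ> \<sigma>) \<circ> r1) l sequentially"
    using cM \<sigma> gluedD(1) unfolding compact_space_sequentially by (metis image_subset_iff o_apply)
  have "(last \<circ> \<sigma> \<circ> r1) i \<in> {0..B}" for i using B \<sigma> by auto
  then obtain ys r2 where r2: "strict_mono r2" and ys: "((last \<circ> \<sigma>) \<circ> r1 \<circ> r2) \<longlonglongrightarrow> ys"
    using seq_compactE[OF compact_imp_seq_compact[OF compact_Icc]] by metis
  define r where "r = r1 \<circ> r2"
  have r: "strict_mono r" unfolding r_def using r1 r2 by (rule strict_mono_o)
  have \<sigma>r: "range (\<sigma> \<circ> r) \<subseteq> glued" using \<sigma> by auto
  have limx: "limitin mtopology (\<lambda>i. butlast ((\<sigma> \<circ> r) i)) l sequentially"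
    using limitin_subsequence[OF r2 lim1] by (simp add: r_def o_def)
  have limy: "(\<lambda>i. last ((\<sigma> \<circ> r) i)) \<longlonglongrightarrow> ys" using ys by (simp add: r_def o_def)
  have "0 \<le> ys"
    using \<sigma>r glued_last_nonneg by (intro tendsto_lowerbound[OF limy] always_eventually) auto
  then consider "ys = 0" | "0 < ys" by linarith
  then show "\<exists>l r. l \<in> glued \<and> strict_mono r \<and> limitin G.mtopology (\<sigma> \<circ> r) l sequentially"
  proof cases
    case 1
    then have "limitin G.mtopology (\<sigma> \<circ> r) (l @ [0]) sequentially"
      using limitin_glued_foot[OF \<sigma>r limx] limy by (simp add: o_def)
    then show ?thesis using glued_foot[OF l] r by blast
  next
    case 2
    then show ?thesis using limitin_glued_away_from_feet[OF fin \<sigma>r limx limy] r by blast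
  qed
qed

end

section \<open>The spaces P_k\<close>

definition compact_lipschitz_connected :: "real \<Rightarrow> 'a set \<Rightarrow> ('a \<Rightarrow> 'a \<Rightarrow> real) \<Rightarrow> bool" where
  "compact_lipschitz_connected C M d \<longleftrightarrow>
     Metric_space M d \<and> compact_space (Metric_space.mtopology M d) \<and> lipschitz_connected C M d"

lemma (in glue) compact_lipschitz_connected_glued:
  assumes "compact_lipschitz_connected 2 M d" and "\<And>\<epsilon>. 0 < \<epsilon> \<Longrightarrow> finite {x \<in> QS. \<epsilon> \<le> R x}"
  shows "compact_lipschitz_connected 2 glued glued_dist"
  unfolding compact_lipschitz_connected_def
proof (intro conjI)
  show "compact_space G.mtopology"
    using assms by (intro compact_space_glued) (auto simp: compact_lipschitz_connected_def)
  show "lipschitz_connected 2 glued glued_dist"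
    using assms(1) by (intro lipschitz_connected_glued) (simp add: compact_lipschitz_connected_def)
qed (rule metric_glued)

lemma compact_lipschitz_connected_point:
  "compact_lipschitz_connected C {x} (\<lambda>a b. if a = b then 0 else 1)"
proof -
  interpret Metric_space "{x}" "\<lambda>a b. if a = b then 0 else 1" by unfold_locales auto
  have "compactin mtopology {x}" by (rule finite_imp_compactin) simp_all
  then have "compact_space mtopology" by (simp add: compact_space_def)
  moreover have "lipschitz_path {x} (\<lambda>a b. if a = b then 0 else 1) (\<lambda>_. x) 0"
    by (rule lipschitz_path_const) simp
  then have "lipschitz_connected C {x} (\<lambda>a b. if a = b then 0 else 1)"
    unfolding lipschitz_connected_def by (intro ballI exI[of _ "\<lambda>_. x"] exI[of _ 0]) auto
  ultimately show ?thesis unfolding compact_lipschitz_connected_def using Metric_space_axioms by blast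
qed

lemma lipschitz_path_cong:
  assumes "\<And>x y. x \<in> M \<Longrightarrow> y \<in> M \<Longrightarrow> d' x y = d x y"
  shows "lipschitz_path M d' g L \<longleftrightarrow> lipschitz_path M d g L"
  using assms by (auto simp: lipschitz_path_def)

lemma compact_lipschitz_connected_cong:
  assumes cl: "compact_lipschitz_connected C M d"
    and agree: "\<And>x y. x \<in> M \<Longrightarrow> y \<in> M \<Longrightarrow> d' x y = d x y"
    and d': "\<And>x y. 0 \<le> d' x y" "\<And>x y. d' x y = d' y x"
  shows "compact_lipschitz_connected C M d'"
proof -
  interpret Metric_space M d using cl by (simp add: compact_lipschitz_connected_def)
  interpret d': Metric_space M d'
  proof
    show "d' x y = 0 \<longleftrightarrow> x = y" if "x \<in> M" "y \<in> M" for x y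
      using that by (simp add: agree)
    show "d' x z \<le> d' x y + d' y z" if "x \<in> M" "y \<in> M" "z \<in> M" for x y z
      using that triangle[of x y z] by (simp add: agree)
  qed (use d' in auto)
  have "d'.mball = mball"
    by (auto simp: fun_eq_iff d'.mball_def mball_def agree)
  then have "d'.mopen = mopen"
    by (simp add: fun_eq_iff d'.mopen_def mopen_def)
  then have "d'.mtopology = mtopology"
    by (simp add: d'.mtopology_def mtopology_def)
  moreover have "lipschitz_connected C M d' \<longleftrightarrow> lipschitz_connected C M d"
    by (simp add: lipschitz_connected_def lipschitz_path_cong[OF agree] agree)
  ultimately show ?thesis
    using cl d'.Metric_space_axioms by (simp add: compact_lipschitz_connected_def)
qed

definition qrad :: "(nat \<Rightarrow> nat \<Rightarrow> real list) \<Rightarrow> nat \<Rightarrow> real list \<Rightarrow> real" where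
  "qrad Q k x = rad k (inv (Q k) x)"

lemma admissibleD:
  assumes "admissible Q" "1 \<le> k"
  shows "inj (Q k)" "range (Q k) \<subseteq> Pk Q k"
  using assms unfolding admissible_def by blast+

lemma glue_level:
  assumes "admissible Q" "1 \<le> k" "Metric_space (Pk Q k) (rhok Q k)"
  shows "glue (Pk Q k) (rhok Q k) (range (Q k)) (qrad Q k)"
  using assms admissibleD[OF assms(1,2)]
  by (auto simp: glue_def glue_axioms_def qrad_def rad_def)

lemma level_Suc_glued:
  assumes "admissible Q" "1 \<le> k" "Metric_space (Pk Q k) (rhok Q k)"
  shows "Pk Q (Suc k) = glue.glued (Pk Q k) (range (Q k)) (qrad Q k)"
    "rhok Q (Suc k) = glue.glued_dist (rhok Q k) (range (Q k)) (qrad Q k)"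
proof -
  interpret glue "Pk Q k" "rhok Q k" "range (Q k)" "qrad Q k"
    by (rule glue_level[OF assms])
  obtain k' where k: "k = Suc k'" using assms(2) by (cases k) auto
  have inj: "inj (Q k)" by (rule admissibleD[OF assms(1,2)])
  show "Pk Q (Suc k) = glued"
    unfolding glued_def using inj k by (auto simp: qrad_def inv_f_f)
  show "rhok Q (Suc k) = glued_dist"
    unfolding fun_eq_iff glued_dist_def height_def
    using k by (auto simp: Let_def qrad_def theta_r_commute)
qed

lemma finite_large_qrad:
  assumes "inj (Q k)" "0 < \<epsilon>"
  shows "finite {x \<in> range (Q k). \<epsilon> \<le> qrad Q k x}"
proof -
  obtain N where N: "(1/2::real) ^ N < \<epsilon>" using real_arch_pow_inv[of \<epsilon> "1/2"] assms(2) by auto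
  have "{x \<in> range (Q k). \<epsilon> \<le> qrad Q k x} \<subseteq> Q k ` {..N}"
  proof clarify
    fix n assume "\<epsilon> \<le> qrad Q k (Q k n)"
    then have "\<epsilon> \<le> (1/2) ^ (n + 1 + k)" using assms(1) by (simp add: qrad_def rad_def)
    then have "\<not> N < n + 1 + k"
      using N power_strict_decreasing[of N "n + 1 + k" "1/2::real"] by auto
    then show "Q k n \<in> Q k ` {..N}" by auto
  qed
  then show ?thesis by (rule finite_subset) simp
qed

lemma Pk_1_glued: "Pk Q 1 = glue.glued {[]} {[]} (\<lambda>_. 1)"
proof -
  interpret glue "{[]}" "\<lambda>a b. if a = b then 0 else 1" "{[]}" "\<lambda>_. 1"
    by unfold_locales auto
  show ?thesis by (auto simp: glued_def)
qed

theorem compact_lipschitz_connected_Pk: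
  assumes adm: "admissible Q" and k: "1 \<le> k"
  shows "compact_lipschitz_connected 2 (Pk Q k) (rhok Q k)"
  using k
proof (induction k rule: nat_induct_at_least)
  case base
  \<comment> \<open>P_1 is a single arc of length 1 attached to a one-point space; its metric agrees
    with the glued one on P_1 only.\<close>
  interpret glue "{[]}" "\<lambda>a b. if a = b then 0 else 1" "{[]}" "\<lambda>_. 1"
    by unfold_locales auto
  have "compact_lipschitz_connected 2 glued glued_dist"
    by (rule compact_lipschitz_connected_glued[OF compact_lipschitz_connected_point]) simp
  then have "compact_lipschitz_connected 2 (Pk Q 1) glued_dist"
    unfolding Pk_1_glued .
  then show ?case
    by (rule compact_lipschitz_connected_cong)
       (auto simp: glued_dist_def theta_r_nonneg theta_r_commute)
next
  case (Suc k)
  then have ms: "Metric_space (Pk Q k) (rhok Q k)" by (simp add: compact_lipschitz_connected_def)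
  interpret glue "Pk Q k" "rhok Q k" "range (Q k)" "qrad Q k"
    by (rule glue_level[OF adm Suc.hyps ms])
  show ?case
    unfolding level_Suc_glued[OF adm Suc.hyps ms]
    using Suc.IH finite_large_qrad[of Q k, OF admissibleD(1)[OF adm Suc.hyps]]
    by (rule compact_lipschitz_connected_glued)
qed

lemma glue_Pk:
  assumes "admissible Q" "1 \<le> k"
  shows "glue (Pk Q k) (rhok Q k) (range (Q k)) (qrad Q k)"
  using compact_lipschitz_connected_Pk[OF assms] glue_level[OF assms]
  by (simp add: compact_lipschitz_connected_def)

lemma Pk_lift:
  assumes "admissible Q" "1 \<le> k" "a \<in> Pk Q k"
  shows "a @ [0] \<in> Pk Q (Suc k)"
proof -
  interpret glue "Pk Q k" "rhok Q k" "range (Q k)" "qrad Q k" by (rule glue_Pk[OF assms(1,2)])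
  show ?thesis using glued_foot[OF assms(3)] level_Suc_glued[OF assms(1,2) Metric_space_axioms] by simp
qed

lemma rhok_lift:
  assumes "admissible Q" "1 \<le> k" "a \<in> Pk Q k" "b \<in> Pk Q k"
  shows "rhok Q (Suc k) (a @ [0]) (b @ [0]) = rhok Q k a b"
proof -
  interpret glue "Pk Q k" "rhok Q k" "range (Q k)" "qrad Q k" by (rule glue_Pk[OF assms(1,2)])
  show ?thesis
    using glued_dist_foot[OF assms(3,4)] level_Suc_glued[OF assms(1,2) Metric_space_axioms] by simp
qed

lemma Pk_descend:
  assumes "admissible Q" "1 \<le> k" "b \<in> Pk Q (Suc k)"
  shows "butlast b \<in> Pk Q k" "rhok Q (Suc k) b (butlast b @ [0]) \<le> (1/2) ^ Suc k"
proof -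
  interpret glue "Pk Q k" "rhok Q k" "range (Q k)" "qrad Q k" by (rule glue_Pk[OF assms(1,2)])
  have b: "b \<in> glued" using assms(3) level_Suc_glued[OF assms(1,2) Metric_space_axioms] by simp
  show "butlast b \<in> Pk Q k" by (rule gluedD(1)[OF b])
  have "height b \<le> (1/2) ^ Suc k"
  proof (cases "butlast b \<in> range (Q k)")
    case True
    have "height b \<le> qrad Q k (butlast b)"
      using height_le_last[OF b] gluedD(2)[OF b True] by simp
    also have "\<dots> \<le> (1/2) ^ Suc k"
      unfolding qrad_def rad_def by (intro power_decreasing) auto
    finally show ?thesis .
  qed (simp add: height_def)
  then show "rhok Q (Suc k) b (butlast b @ [0]) \<le> (1/2) ^ Suc k"
    using glued_dist_to_foot[OF b] level_Suc_glued[OF assms(1,2) Metric_space_axioms] by simp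
qed

lemma Pk_length: "admissible Q \<Longrightarrow> a \<in> Pk Q k \<Longrightarrow> length a = k"
proof (induction Q k arbitrary: a rule: Pk.induct)
  case (3 Q k)
  have "Q (Suc k) n \<in> Pk Q (Suc k)" for n
    using admissibleD(2)[OF "3.prems"(1), of "Suc k"] by auto
  then have "length (Q (Suc k) n) = Suc k" for n
    using "3.IH" "3.prems"(1) by blast
  then show ?case using "3.prems" "3.IH" by auto
qed auto

lemma append_replicate_Suc: "a @ replicate (Suc m) x = (a @ replicate m x) @ [x]"
  by (simp flip: replicate_append_same)

lemma Pk_pad:
  assumes "admissible Q" "1 \<le> k" "a \<in> Pk Q k"
  shows "a @ replicate m 0 \<in> Pk Q (k + m)"
proof (induction m)
  case (Suc m)
  show ?case
    unfolding append_replicate_Suc add_Suc_right using assms(2) by (intro Pk_lift[OF assms(1) _ Suc.IH]) simp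
qed (use assms(3) in simp)

lemma rhok_pad:
  assumes "admissible Q" "1 \<le> k" "a \<in> Pk Q k" "b \<in> Pk Q k"
  shows "rhok Q (k + m) (a @ replicate m 0) (b @ replicate m 0) = rhok Q k a b"
proof (induction m)
  case (Suc m)
  have "rhok Q (Suc (k + m)) ((a @ replicate m 0) @ [0]) ((b @ replicate m 0) @ [0])
      = rhok Q (k + m) (a @ replicate m 0) (b @ replicate m 0)"
    using assms(2) by (intro rhok_lift[OF assms(1) _ Pk_pad[OF assms(1-3)] Pk_pad[OF assms(1,2,4)]]) simp
  then show ?case unfolding append_replicate_Suc add_Suc_right using Suc.IH by simp
qed simp

lemma emb_pad [simp]: "emb (a @ replicate m 0) = emb a"
  by (auto simp: emb_def fun_eq_iff nth_append)

lemma emb_eq_imp_eq: "length a = length b \<Longrightarrow> emb a = emb b \<Longrightarrow> a = b"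
  by (metis emb_def nth_equalityI)

lemma map_emb: "map (emb a) [0..<length a] = a"
  by (rule nth_equalityI) (auto simp: emb_def)

lemma emb_Pk_eq_pad:
  assumes "admissible Q" "1 \<le> k" "a \<in> Pk Q k" "b \<in> Pk Q (k + m)" "emb a = emb b"
  shows "b = a @ replicate m 0"
  using assms by (intro emb_eq_imp_eq) (simp_all add: Pk_length)

lemma rho_inf_emb:
  assumes adm: "admissible Q" and K: "1 \<le> K" and a: "a \<in> Pk Q K" and b: "b \<in> Pk Q K"
  shows "rho_inf Q (emb a) (emb b) = rhok Q K a b"
proof -
  define k where "k = (LEAST k. 1 \<le> k \<and> emb a \<in> emb ` Pk Q k \<and> emb b \<in> emb ` Pk Q k)"
  have "1 \<le> K \<and> emb a \<in> emb ` Pk Q K \<and> emb b \<in> emb ` Pk Q K" using K a b by auto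
  then have "1 \<le> k \<and> emb a \<in> emb ` Pk Q k \<and> emb b \<in> emb ` Pk Q k" "k \<le> K"
    unfolding k_def by (rule LeastI, rule Least_le)
  then obtain a0 b0 where k: "1 \<le> k" and a0: "a0 \<in> Pk Q k" "emb a0 = emb a"
    and b0: "b0 \<in> Pk Q k" "emb b0 = emb b"
    by force
  have K_eq: "K = k + (K - k)" using \<open>k \<le> K\<close> by simp
  have pads: "a = a0 @ replicate (K - k) 0" "b = b0 @ replicate (K - k) 0"
    using emb_Pk_eq_pad[OF adm k a0(1)] emb_Pk_eq_pad[OF adm k b0(1)] a b a0(2) b0(2) K_eq by metis+
  have "rho_inf Q (emb a) (emb b) = rhok Q k (map (emb a) [0..<k]) (map (emb b) [0..<k])"
    unfolding rho_inf_def Let_def k_def ..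
  also have "\<dots> = rhok Q k a0 b0"
    using map_emb[of a0] map_emb[of b0] Pk_length[OF adm] a0 b0 by simp
  also have "\<dots> = rhok Q K a b"
    using rhok_pad[OF adm k a0(1) b0(1), of "K - k"] K_eq pads by simp
  finally show ?thesis .
qed

lemma Pcal_common_level:
  assumes adm: "admissible Q" and "x \<in> Pcal Q" "y \<in> Pcal Q"
  obtains k a b where "1 \<le> k" "a \<in> Pk Q k" "b \<in> Pk Q k" "x = emb a" "y = emb b"
proof -
  obtain k1 a k2 b where a: "1 \<le> k1" "a \<in> Pk Q k1" "x = emb a" and b: "1 \<le> k2" "b \<in> Pk Q k2" "y = emb b"
    using assms(2,3) unfolding Pcal_def by auto
  let ?k = "max k1 k2"
  have "a @ replicate (?k - k1) 0 \<in> Pk Q ?k" "b @ replicate (?k - k2) 0 \<in> Pk Q ?k"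
    using Pk_pad[OF adm a(1,2), of "?k - k1"] Pk_pad[OF adm b(1,2), of "?k - k2"] by simp_all
  then show ?thesis using that[of ?k] a b by simp
qed

lemma Pk_near_lower_level:
  assumes adm: "admissible Q" and k: "1 \<le> k" and a: "a \<in> Pk Q (k + m)"
  shows "\<exists>b\<in>Pk Q k. rhok Q (k + m) a (b @ replicate m 0) \<le> (1/2) ^ k - (1/2) ^ (k + m)"
  using a
proof (induction m arbitrary: a)
  case 0
  interpret Metric_space "Pk Q k" "rhok Q k"
    using compact_lipschitz_connected_Pk[OF adm k] by (simp add: compact_lipschitz_connected_def)
  show ?case using 0 by force
next
  case (Suc m)
  interpret Metric_space "Pk Q (Suc (k + m))" "rhok Q (Suc (k + m))"
    using compact_lipschitz_connected_Pk[OF adm] by (simp add: compact_lipschitz_connected_def)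
  have km: "1 \<le> k + m" using k by simp
  have a: "a \<in> Pk Q (Suc (k + m))" using Suc.prems by simp
  obtain b where b: "b \<in> Pk Q k"
    and near: "rhok Q (k + m) (butlast a) (b @ replicate m 0) \<le> (1/2) ^ k - (1/2) ^ (k + m)"
    using Suc.IH Pk_descend(1)[OF adm km a] by blast
  have bm: "b @ replicate m 0 \<in> Pk Q (k + m)" by (rule Pk_pad[OF adm k b])
  have "rhok Q (Suc (k + m)) a ((b @ replicate m 0) @ [0])
      \<le> rhok Q (Suc (k + m)) a (butlast a @ [0])
        + rhok Q (Suc (k + m)) (butlast a @ [0]) ((b @ replicate m 0) @ [0])"
    using a Pk_lift[OF adm km Pk_descend(1)[OF adm km a]] Pk_lift[OF adm km bm] by (intro triangle)
  also have "\<dots> \<le> (1/2) ^ Suc (k + m) + ((1/2) ^ k - (1/2) ^ (k + m))"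
    using Pk_descend[OF adm km a] rhok_lift[OF adm km _ bm] near by (intro add_mono) auto
  also have "\<dots> = (1/2) ^ k - (1/2) ^ (k + Suc m)" by simp
  finally show ?case using b unfolding append_replicate_Suc add_Suc_right by blast
qed

lemma emb_in_Pcal: "1 \<le> k \<Longrightarrow> a \<in> Pk Q k \<Longrightarrow> emb a \<in> Pcal Q"
  unfolding Pcal_def by blast

section \<open>The completion P_infinity\<close>

lemma metric_dist: "Metric_space M (dist :: 'a::metric_space \<Rightarrow> 'a \<Rightarrow> real)"
  by unfold_locales (auto simp: dist_commute dist_triangle)

(* Approximations p i of z with dist (p i) z < delta / 2^(i+2) are joined by paths with Lipschitz
   constant C delta / 2^(i+1); run on the dyadic blocks, they concatenate to constant C delta. *)
lemma lipschitz_path_to_closure_point: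
  fixes A :: "'a::metric_space set"
  assumes lc: "lipschitz_connected C A dist" and C: "0 \<le> C" and z: "z \<in> closure A" and \<delta>: "0 < \<delta>"
  shows "\<exists>p\<in>A. \<exists>g. lipschitz_path (closure A) dist g (C * \<delta>) \<and> g 0 = p \<and> g 1 = z \<and> dist p z \<le> \<delta>"
proof -
  interpret Metric_space "closure A" dist by (rule metric_dist)
  have "\<forall>i. \<exists>q\<in>A. dist q z < \<delta> / 2 ^ (i + 2)"
    using z \<delta> by (simp add: closure_approachable)
  then obtain p where p: "\<And>i. p i \<in> A" "\<And>i. dist (p i) z < \<delta> / 2 ^ (i + 2)"
    by metis
  have "C * dist (p i) (p (Suc i)) \<le> C * \<delta> / 2 ^ Suc i" for i
  proof -
    have "dist (p i) (p (Suc i)) \<le> dist (p i) z + dist (p (Suc i)) z" by (rule dist_triangle2)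
    also have "\<dots> \<le> \<delta> / 2 ^ (i + 2) + \<delta> / 2 ^ (Suc i + 2)" using p(2) by (intro add_mono less_imp_le)
    also have "\<dots> \<le> \<delta> / 2 ^ Suc i" using \<delta> by (simp add: field_simps)
    finally have "C * dist (p i) (p (Suc i)) \<le> C * (\<delta> / 2 ^ Suc i)" by (rule mult_left_mono[OF _ C])
    then show ?thesis by simp
  qed
  then have "\<forall>i. \<exists>c. lipschitz_path A dist c (C * \<delta> / 2 ^ Suc i) \<and> c 0 = p i \<and> c 1 = p (Suc i)"
    using lc p(1) unfolding lipschitz_connected_def by (meson lipschitz_path_mono order.trans)
  then obtain c where c: "\<And>i. lipschitz_path (closure A) dist (c i) (C * \<delta> / 2 ^ Suc i)"
    "\<And>i. c i 0 = p i" "\<And>i. c i 1 = p (Suc i)"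
    using lipschitz_path_subset[OF _ closure_subset] by metis
  have "lipschitz_path (closure A) dist (dyadic_concat c z) (C * \<delta>)"
  proof (rule lipschitz_path_dyadic_concat)
    show "(\<lambda>m. dist (c m 0) z) \<longlonglongrightarrow> 0"
    proof (rule tendsto_sandwich[OF _ _ tendsto_const])
      have "(\<lambda>m. \<delta> / 4 * (1 / 2) ^ m) \<longlonglongrightarrow> \<delta> / 4 * 0"
        by (intro tendsto_mult tendsto_const LIMSEQ_realpow_zero) auto
      then show "(\<lambda>m. \<delta> / 4 * (1 / 2) ^ m) \<longlonglongrightarrow> 0" by simp
      have "dist (c m 0) z \<le> \<delta> / 4 * (1 / 2) ^ m" for m
      proof -
        have "dist (c m 0) z \<le> \<delta> / 2 ^ (m + 2)" using p(2)[of m] c(2)[of m] by simp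
        also have "\<dots> = \<delta> / 4 * (1 / 2) ^ m" by (simp add: power_add power_one_over)
        finally show ?thesis .
      qed
      then show "\<forall>\<^sub>F m in sequentially. dist (c m 0) z \<le> \<delta> / 4 * (1 / 2) ^ m"
        by (simp add: always_eventually)
    qed simp
  qed (use c z in simp_all)
  moreover have "dist (p 0) z \<le> \<delta>" using p(2)[of 0] \<delta> by simp
  moreover have "dyadic_concat c z 0 = p 0"
    using dyadic_concat_dyadic[of c z 0] c(2,3) by simp
  ultimately show ?thesis
    using p(1) by (intro bexI[of _ "p 0"] exI[of _ "dyadic_concat c z"]) auto
qed

lemma quasiconvex_closure:
  fixes A :: "'a::metric_space set"
  assumes lc: "lipschitz_connected C A dist" and C: "0 \<le> C"
  shows "quasiconvex C (closure A) dist"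
proof (rule quasiconvexI_approx)
  interpret Metric_space "closure A" dist by (rule metric_dist)
  fix z w and \<epsilon> :: real assume z: "z \<in> closure A" and w: "w \<in> closure A" and \<epsilon>: "0 < \<epsilon>"
  define \<delta> where "\<delta> = \<epsilon> / (4 * C + 1)"
  have \<delta>: "0 < \<delta>" "4 * C * \<delta> \<le> \<epsilon>"
    using C \<epsilon> by (auto simp: \<delta>_def field_simps)
  obtain p g1 where p: "p \<in> A" "dist p z \<le> \<delta>"
    and g1: "lipschitz_path (closure A) dist g1 (C * \<delta>)" "g1 0 = p" "g1 1 = z"
    using lipschitz_path_to_closure_point[OF lc C z \<delta>(1)] by blast
  obtain q g3 where q: "q \<in> A" "dist q w \<le> \<delta>"
    and g3: "lipschitz_path (closure A) dist g3 (C * \<delta>)" "g3 0 = q" "g3 1 = w"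
    using lipschitz_path_to_closure_point[OF lc C w \<delta>(1)] by blast
  obtain g2 L where g2: "lipschitz_path A dist g2 L" "g2 0 = p" "g2 1 = q" "L \<le> C * dist p q"
    using lc p(1) q(1) unfolding lipschitz_connected_def by blast
  obtain g where g: "lipschitz_path (closure A) dist g (C * \<delta> + L + C * \<delta>)" "g 0 = z" "g 1 = w"
    using lipschitz_path_join3[OF lipschitz_path_reverse[OF g1(1)]
        lipschitz_path_subset[OF g2(1) closure_subset] g3(1)] g1 g2 g3
    by auto
  have "dist p q \<le> dist z w + 2 * \<delta>"
    using dist_triangle[of p q z] dist_triangle[of z q w] p(2) q(2) by (simp add: dist_commute)
  then have "C * dist p q \<le> C * (dist z w + 2 * \<delta>)" by (rule mult_left_mono[OF _ C])
  then have "C * \<delta> + L + C * \<delta> \<le> C * dist z w + \<epsilon>"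
    using g2(4) \<delta>(2) by (simp add: algebra_simps)
  then show "\<exists>g L. lipschitz_path (closure A) dist g L \<and> g 0 = z \<and> g 1 = w \<and> L \<le> C * dist z w + \<epsilon>"
    using g by blast
qed

lemma compact_closure_of_finite_nets:
  fixes A :: "'a::complete_space set"
  assumes nets: "\<And>\<epsilon>. 0 < \<epsilon> \<Longrightarrow> \<exists>F. finite F \<and> (\<forall>a\<in>A. \<exists>b\<in>F. dist b a < \<epsilon>)"
  shows "compact (closure A)"
  unfolding compact_eq_totally_bounded
proof (intro conjI allI impI)
  show "complete (closure A)" by (simp add: complete_eq_closed)
  fix \<epsilon> :: real assume "0 < \<epsilon>"
  then obtain F where F: "finite F" "\<And>a. a \<in> A \<Longrightarrow> \<exists>b\<in>F. dist b a < \<epsilon> / 2"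
    using nets[of "\<epsilon> / 2"] by auto
  have "y \<in> (\<Union>b\<in>F. ball b \<epsilon>)" if "y \<in> closure A" for y
  proof -
    have "\<exists>a\<in>A. dist a y < \<epsilon> / 2"
      using that \<open>0 < \<epsilon>\<close> unfolding closure_approachable by (meson half_gt_zero)
    then obtain a where a: "a \<in> A" "dist a y < \<epsilon> / 2" by blast
    obtain b where b: "b \<in> F" "dist b a < \<epsilon> / 2" using F(2)[OF a(1)] by blast
    have "dist b y < \<epsilon>" using dist_triangle[of b y a] a(2) b(2) by linarith
    then show ?thesis using b(1) by auto
  qed
  then show "\<exists>k. finite k \<and> closure A \<subseteq> (\<Union>x\<in>k. ball x \<epsilon>)"
    using F(1) by blast
qed

lemma hausdorff_pompeiu_closure_le:
  fixes A B :: "'a::metric_space set"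
  assumes B: "B \<noteq> {}" "B \<subseteq> closure A" and near: "\<And>a. a \<in> A \<Longrightarrow> infdist a B \<le> \<epsilon>"
  shows "0 \<le> hausdorff_pompeiu B (closure A)" "hausdorff_pompeiu B (closure A) \<le> \<epsilon>"
proof -
  have "(SUP b\<in>B. infdist b (closure A)) = (SUP b\<in>B. 0)"
    by (rule SUP_cong) (meson B(2) infdist_zero subsetD)+
  then have first: "(SUP b\<in>B. infdist b (closure A)) = 0" using cSUP_const[OF B(1)] by simp
  have "infdist z B \<le> \<epsilon>" if z: "z \<in> closure A" for z
  proof (rule field_le_epsilon)
    fix \<eta> :: real assume "0 < \<eta>"
    then obtain a where "a \<in> A" "dist a z < \<eta>"
      using z unfolding closure_approachable by blast
    then show "infdist z B \<le> \<epsilon> + \<eta>"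
      using infdist_triangle[of z B a] near[of a] dist_commute[of a z] by linarith
  qed
  moreover have "closure A \<noteq> {}" using B by auto
  ultimately have second: "(SUP z\<in>closure A. infdist z B) \<le> \<epsilon>"
    by (intro cSUP_least) auto
  obtain a where "a \<in> A" using B by fastforce
  then have "0 \<le> \<epsilon>" using near[of a] infdist_nonneg[of a B] by linarith
  then show "0 \<le> hausdorff_pompeiu B (closure A)" "hausdorff_pompeiu B (closure A) \<le> \<epsilon>"
    using second unfolding hausdorff_pompeiu_def first by simp_all
qed

locale isometric_model =
  fixes Q :: "nat \<Rightarrow> nat \<Rightarrow> real list" and j :: "(nat \<Rightarrow> real) \<Rightarrow> 'z::complete_space"
  assumes adm: "admissible Q"
    and iso: "\<forall>x\<in>Pcal Q. \<forall>y\<in>Pcal Q. dist (j x) (j y) = rho_inf Q x y"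
begin

lemma dist_j_emb:
  assumes "1 \<le> k" "a \<in> Pk Q k" "b \<in> Pk Q k"
  shows "dist (j (emb a)) (j (emb b)) = rhok Q k a b"
  using iso emb_in_Pcal[OF assms(1,2)] emb_in_Pcal[OF assms(1,3)] rho_inf_emb[OF adm assms] by simp

lemma lipschitz_connected_image: "lipschitz_connected 2 (j ` Pcal Q) dist"
  unfolding lipschitz_connected_def
proof (intro ballI)
  fix p q assume "p \<in> j ` Pcal Q" "q \<in> j ` Pcal Q"
  then obtain x y where xy: "x \<in> Pcal Q" "y \<in> Pcal Q" "p = j x" "q = j y" by blast
  then obtain k a b where k: "1 \<le> k" and ab: "a \<in> Pk Q k" "b \<in> Pk Q k" "x = emb a" "y = emb b"
    using Pcal_common_level[OF adm] by metis
  obtain g L where g: "lipschitz_path (Pk Q k) (rhok Q k) g L" "g 0 = a" "g 1 = b" "L \<le> 2 * rhok Q k a b"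
    using compact_lipschitz_connected_Pk[OF adm k] ab(1,2)
    unfolding compact_lipschitz_connected_def lipschitz_connected_def by blast
  have "lipschitz_path (j ` Pcal Q) dist ((j \<circ> emb) \<circ> g) L"
    by (rule lipschitz_path_isometric_image[OF g(1)]) (auto simp: emb_in_Pcal[OF k] dist_j_emb[OF k])
  moreover have "L \<le> 2 * dist p q" using g(4) xy ab by (simp add: dist_j_emb[OF k])
  ultimately show "\<exists>g L. lipschitz_path (j ` Pcal Q) dist g L \<and> g 0 = p \<and> g 1 = q \<and> L \<le> 2 * dist p q"
    using g(2,3) xy ab by (intro exI) auto
qed

lemma near_level_image:
  assumes k: "1 \<le> k" and x: "x \<in> Pcal Q"
  shows "\<exists>b\<in>Pk Q k. dist (j x) (j (emb b)) \<le> (1/2) ^ k"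
proof -
  obtain K a where K: "1 \<le> K" and a: "a \<in> Pk Q K" "x = emb a" using x unfolding Pcal_def by blast
  show ?thesis
  proof (cases "K \<le> k")
    case True
    then have "a @ replicate (k - K) 0 \<in> Pk Q k" using Pk_pad[OF adm K a(1), of "k - K"] by simp
    then show ?thesis using a(2) by (intro bexI[of _ "a @ replicate (k - K) 0"]) auto
  next
    case False
    then obtain m where m: "K = k + m" by (metis le_add_diff_inverse nat_le_linear)
    then obtain b where b: "b \<in> Pk Q k"
      and near: "rhok Q K a (b @ replicate m 0) \<le> (1/2) ^ k - (1/2) ^ (k + m)"
      using Pk_near_lower_level[OF adm k] a(1) by blast
    have "b @ replicate m 0 \<in> Pk Q K" using Pk_pad[OF adm k b, of m] m by simp
    then have "dist (j x) (j (emb b)) = rhok Q K a (b @ replicate m 0)"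
      using dist_j_emb[OF K a(1)] a(2) by (metis emb_pad)
    also have "\<dots> \<le> (1/2) ^ k" using near zero_le_power[of "1/2::real" "k + m"] by linarith
    finally show ?thesis using b by blast
  qed
qed

lemma compact_closure_image: "compact (closure (j ` Pcal Q))"
proof (rule compact_closure_of_finite_nets)
  fix \<epsilon> :: real assume \<epsilon>: "0 < \<epsilon>"
  obtain k where k: "(1/2::real) ^ k < \<epsilon> / 2" using real_arch_pow_inv[of "\<epsilon> / 2" "1/2"] \<epsilon> by auto
  moreover have "(1/2::real) ^ Suc k \<le> (1/2) ^ k" by (rule power_decreasing) simp_all
  ultimately have k': "(1/2::real) ^ Suc k < \<epsilon> / 2" by linarith
  interpret L: Metric_space "Pk Q (Suc k)" "rhok Q (Suc k)"
    using compact_lipschitz_connected_Pk[OF adm] by (simp add: compact_lipschitz_connected_def)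
  have tb: "L.mtotally_bounded (Pk Q (Suc k))"
    using compact_lipschitz_connected_Pk[OF adm, of "Suc k"] L.compact_space_eq_mcomplete_mtotally_bounded
    by (simp add: compact_lipschitz_connected_def)
  have "0 < \<epsilon> / 2" using \<epsilon> by simp
  then obtain F where F: "finite F" "F \<subseteq> Pk Q (Suc k)"
    "Pk Q (Suc k) \<subseteq> (\<Union>b\<in>F. L.mball b (\<epsilon> / 2))"
    using tb unfolding L.mtotally_bounded_def by metis
  have "\<exists>b\<in>(j \<circ> emb) ` F. dist b p < \<epsilon>" if p: "p \<in> j ` Pcal Q" for p
  proof -
    obtain x where x: "x \<in> Pcal Q" "p = j x" using p by blast
    obtain c where c: "c \<in> Pk Q (Suc k)" "dist (j x) (j (emb c)) \<le> (1/2) ^ Suc k"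
      using near_level_image[OF _ x(1), of "Suc k"] by auto
    obtain b where b: "b \<in> F" "rhok Q (Suc k) b c < \<epsilon> / 2" using F(3) c(1) by auto
    have "dist (j (emb b)) (j (emb c)) < \<epsilon> / 2"
      using b F(2) c(1) dist_j_emb[of "Suc k" b c] by auto
    then have "dist (j (emb b)) p < \<epsilon>"
      using c(2) k' x(2) dist_triangle[of "j (emb b)" p "j (emb c)"] by (simp add: dist_commute)
    then show ?thesis using b(1) by auto
  qed
  then show "\<exists>F. finite F \<and> (\<forall>a\<in>j ` Pcal Q. \<exists>b\<in>F. dist b a < \<epsilon>)"
    using F(1) by (intro exI[of _ "(j \<circ> emb) ` F"]) auto
qed

lemma hausdorff_pompeiu_level:
  assumes k: "1 \<le> k"
  shows "0 \<le> hausdorff_pompeiu (j ` emb ` Pk Q k) (closure (j ` Pcal Q))"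
    "hausdorff_pompeiu (j ` emb ` Pk Q k) (closure (j ` Pcal Q)) \<le> (1/2) ^ k"
proof -
  have "[0] @ replicate (k - 1) 0 \<in> Pk Q (1 + (k - 1))" by (rule Pk_pad[OF adm]) simp_all
  then have ne: "j ` emb ` Pk Q k \<noteq> {}" using k by auto
  have sub: "j ` emb ` Pk Q k \<subseteq> closure (j ` Pcal Q)"
    using emb_in_Pcal[OF k] closure_subset by blast
  have near: "infdist p (j ` emb ` Pk Q k) \<le> (1/2) ^ k" if p: "p \<in> j ` Pcal Q" for p
  proof -
    obtain x where x: "x \<in> Pcal Q" "p = j x" using p by blast
    obtain b where "b \<in> Pk Q k" "dist (j x) (j (emb b)) \<le> (1/2) ^ k"
      using near_level_image[OF k x(1)] by blast
    then show ?thesis using x(2) by (intro infdist_le2[of "j (emb b)"]) auto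
  qed
  show "0 \<le> hausdorff_pompeiu (j ` emb ` Pk Q k) (closure (j ` Pcal Q))"
    "hausdorff_pompeiu (j ` emb ` Pk Q k) (closure (j ` Pcal Q)) \<le> (1/2) ^ k"
    using hausdorff_pompeiu_closure_le[OF ne sub near] by simp_all
qed

lemma hausdorff_pompeiu_levels_tendsto:
  "(\<lambda>k. hausdorff_pompeiu (j ` emb ` Pk Q k) (closure (j ` Pcal Q))) \<longlonglongrightarrow> 0"
proof (rule tendsto_sandwich[OF _ _ tendsto_const LIMSEQ_realpow_zero[of "1/2"]])
  show "\<forall>\<^sub>F k in sequentially. 0 \<le> hausdorff_pompeiu (j ` emb ` Pk Q k) (closure (j ` Pcal Q))"
    using hausdorff_pompeiu_level(1) eventually_ge_at_top[of 1] by (rule eventually_mono[rotated])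
  show "\<forall>\<^sub>F k in sequentially. hausdorff_pompeiu (j ` emb ` Pk Q k) (closure (j ` Pcal Q)) \<le> (1/2) ^ k"
    using hausdorff_pompeiu_level(2) eventually_ge_at_top[of 1] by (rule eventually_mono[rotated])
qed simp_all

end

theorem proposition4p9:
  fixes Q :: "nat \<Rightarrow> nat \<Rightarrow> real list"
    and j :: "(nat \<Rightarrow> real) \<Rightarrow> 'z::complete_space"
  assumes adm: "admissible Q"
    and iso: "\<forall>x\<in>Pcal Q. \<forall>y\<in>Pcal Q. dist (j x) (j y) = rho_inf Q x y"
  shows "(\<forall>k\<ge>1. Metric_space (Pk Q k) (rhok Q k)
              \<and> compact_space (Metric_space.mtopology (Pk Q k) (rhok Q k))
              \<and> quasiconvex 2 (Pk Q k) (rhok Q k))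
         \<and> compact (closure (j ` Pcal Q))
         \<and> quasiconvex 2 (closure (j ` Pcal Q)) dist
         \<and> (\<lambda>k. hausdorff_pompeiu (j ` emb ` Pk Q k) (closure (j ` Pcal Q))) \<longlonglongrightarrow> 0"
proof -
  interpret isometric_model Q j using adm iso by unfold_locales
  have "\<forall>k\<ge>1. Metric_space (Pk Q k) (rhok Q k)
              \<and> compact_space (Metric_space.mtopology (Pk Q k) (rhok Q k))
              \<and> quasiconvex 2 (Pk Q k) (rhok Q k)"
    using compact_lipschitz_connected_Pk[OF adm]
    by (auto simp: compact_lipschitz_connected_def intro: quasiconvex_if_lipschitz_connected)
  moreover have "quasiconvex 2 (closure (j ` Pcal Q)) dist"
    by (rule quasiconvex_closure[OF lipschitz_connected_image]) simp
  ultimately show ?thesis using compact_closure_image hausdorff_pompeiu_levels_tendsto by blast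
qed

end
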